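(* Run ANSGD with $(\gamma_t)$ positive and monotonically non-increasing and with stepsizes $\eta_t=\frac{\alpha_t}{\mu+\theta_t}$, and assume $\mu+\theta_t-\alpha_t\mathbb{E}L_{t+1}>0$ for all $t$. Then for every fixed $\mathbf{x}\in\mathbb{R}^D$ and every $t\geq 0$, $$\mathbb{E}\Delta_{t+1} \leq (1-\alpha_t)\mathbb{E}\Delta_t + \alpha_t\theta_t D_t^2-\alpha_t(\mu+\theta_t) D_{t+1}^2 + \frac{\alpha_t}{2(\mu+\theta_t-\alpha_t\mathbb{E}L_{t+1})}\sigma^2 + (1-\alpha_t)(\gamma_t-\gamma_{t+1})D_{\mathcal{U}}.$$
   Context: Setting: $\|\cdot\|$ is the Euclidean norm; $\boldsymbol{\xi}$ is a random vector with distribution $P$. Objective $\Phi(\mathbf{x})=f(\mathbf{x})+g(\mathbf{x})$ on $\mathbb{R}^D$ with $f(\mathbf{x})=\mathbb{E}_{\boldsymbol{\xi}}f(\mathbf{x},\boldsymbol{\xi})$, $g(\mathbf{x})=\mathbb{E}_{\boldsymbol{\xi}}g(\mathbf{x},\boldsymbol{\xi})$. Each $g(\cdot,\boldsymbol{\xi})$ is differentiable; $g$ is convex, $L_g$-Lipschitz smooth ($g(\mathbf{x})\le g(\mathbf{y})+\langle\nabla g(\mathbf{y}),\mathbf{x}-\mathbf{y}\rangle+\frac{L_g}{2}\|\mathbf{x}-\mathbf{y}\|^2$) and $\mu$-strongly convex for some $\mu\ge0$ ($g(\mathbf{x})\ge g(\mathbf{y})+\langle\nabla g(\mathbf{y}),\mathbf{x}-\mathbf{y}\rangle+\frac{\mu}{2}\|\mathbf{x}-\mathbf{y}\|^2$).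 The loss has the form $f(\mathbf{x},\boldsymbol{\xi})=\max_{\mathbf{u}\in\mathcal{U}}[\langle A_{\boldsymbol{\xi}}\mathbf{x},\mathbf{u}\rangle-Q(\mathbf{u})]$ with $\mathcal{U}\subseteq\mathbb{R}^m$ convex, $Q$ continuous convex, $A_{\boldsymbol{\xi}}:\mathbb{R}^D\to\mathbb{R}^m$ linear with operator norm $\|A\|:=\max\{\langle A\mathbf{x},\mathbf{u}\rangle:\|\mathbf{x}\|=\|\mathbf{u}\|=1\}$. Let $\omega:\mathcal{U}\to[0,\infty)$ be $\zeta$-strongly convex, $D_{\mathcal{U}}:=\max_{\mathcal{U}}\omega<\infty$, and for $\gamma>0$, $\hat{f}(\mathbf{x},\boldsymbol{\xi},\gamma):=\max_{\mathbf{u}\in\mathcal{U}}[\langle A_{\boldsymbol{\xi}}\mathbf{x},\mathbf{u}\rangle-Q(\mathbf{u})-\gamma\omega(\mathbf{u})]$. Algorithm ANSGD: given sequences $\gamma_t>0$, $\eta_t\ge0$, $\theta_t\ge0$, $0\le\alpha_t\le1$, i.i.d. samples $\boldsymbol{\xi}_1,\boldsymbol{\xi}_2,\ldots\sim P$ and initial points $\mathbf{x}_0,\mathbf{v}_0$, for $t=0,1,2,\ldots$: (1) $\mathbf{y}_t=\frac{(1-\alpha_t)(\mu+\theta_t)\mathbf{x}_t+\alpha_t\theta_t\mathbf{v}_t}{\mu(1-\alpha_t)+\theta_t}$; (2) set $\hat{f}_{t+1}(\cdot):=\hat{f}(\cdot,\boldsymbol{\xi}_{t+1},\gamma_{t+1})$,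 $g_{t+1}(\cdot):=g(\cdot,\boldsymbol{\xi}_{t+1})$; (3) $\mathbf{x}_{t+1}=\mathbf{y}_t-\eta_t[\nabla\hat{f}_{t+1}(\mathbf{y}_t)+\nabla g_{t+1}(\mathbf{y}_t)]$; (4) $\mathbf{v}_{t+1}=\frac{\theta_t\mathbf{v}_t+\mu\mathbf{y}_t-[\nabla\hat{f}_{t+1}(\mathbf{y}_t)+\nabla g_{t+1}(\mathbf{y}_t)]}{\mu+\theta_t}$. Notation: $\mathbb{E}$ is expectation over all samples; $F(\mathbf{z},\gamma):=\mathbb{E}_{\boldsymbol{\xi}}[\hat{f}(\mathbf{z},\boldsymbol{\xi},\gamma)+g(\mathbf{z},\boldsymbol{\xi})]$ (fresh sample, $\mathbf{z}$ fixed); $L_t:=L_g+\frac{\|A_{\boldsymbol{\xi}_t}\|^2}{\gamma_t\zeta}$; $\sigma_t(\mathbf{z}):=[\nabla\hat{f}_t(\mathbf{z})+\nabla g_t(\mathbf{z})]-\nabla_{\mathbf{z}}F(\mathbf{z},\gamma_t)$; $\sigma^2:=\mathbb{E}\max_t\|\sigma_{t+1}(\mathbf{y}_t)\|^2$; for a fixed comparator $\mathbf{x}$, $\Delta_t:=F(\mathbf{x}_t,\gamma_t)-F(\mathbf{x},\gamma_t)$ and $D_t^2:=\frac12\mathbb{E}\|\mathbf{x}-\mathbf{v}_t\|^2$. *)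

theory Defs
  imports "HOL-Analysis.Analysis" "HOL-Probability.Probability"
begin

definition grad :: "('a::real_inner \<Rightarrow> real) \<Rightarrow> 'a \<Rightarrow> 'a" where
  "grad h z = (SOME v. GDERIV h z :> v)"

definition strongly_convex_on :: "'a::real_normed_vector set \<Rightarrow> ('a \<Rightarrow> real) \<Rightarrow> real \<Rightarrow> bool" where
  "strongly_convex_on S h c \<longleftrightarrow>
     (\<forall>x\<in>S. \<forall>y\<in>S. \<forall>t::real. 0 \<le> t \<and> t \<le> 1 \<longrightarrow>
        h ((1 - t) *\<^sub>R x + t *\<^sub>R y) \<le> (1 - t) * h x + t * h y - c / 2 * t * (1 - t) * (norm (x - y))\<^sup>2)"

definition opnorm :: "('a::real_inner \<Rightarrow> 'b::real_inner) \<Rightarrow> real" where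
  "opnorm A = Sup {inner (A x) u | x u. norm x = 1 \<and> norm u = 1}"

definition fhat :: "('b \<Rightarrow> 'd \<Rightarrow> 'm::real_inner) \<Rightarrow> 'm set \<Rightarrow> ('m \<Rightarrow> real) \<Rightarrow> ('m \<Rightarrow> real)
                     \<Rightarrow> real \<Rightarrow> 'd \<Rightarrow> 'b \<Rightarrow> real" where
  "fhat A U Q om \<gamma> z s = Sup ((\<lambda>u. inner (A s z) u - Q u - \<gamma> * om u) ` U)"

(* ANSGD iterates (x_t, v_t) along one sample path.  G t y is the stochastic gradient
   grad fhat_{t+1}(y) + grad g_{t+1}(y) at the point y (it depends on the sample xi_{t+1}). *)
definition ansgd_y :: "real \<Rightarrow> real \<Rightarrow> real \<Rightarrow> 'd::real_vector \<Rightarrow> 'd \<Rightarrow> 'd" where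
  "ansgd_y \<mu> \<alpha> \<theta> x v =
     (1 / (\<mu> * (1 - \<alpha>) + \<theta>)) *\<^sub>R ((1 - \<alpha>) * (\<mu> + \<theta>)) *\<^sub>R x + (1 / (\<mu> * (1 - \<alpha>) + \<theta>)) *\<^sub>R (\<alpha> * \<theta>) *\<^sub>R v"

primrec ansgd :: "real \<Rightarrow> (nat \<Rightarrow> real) \<Rightarrow> (nat \<Rightarrow> real) \<Rightarrow> (nat \<Rightarrow> real)
                  \<Rightarrow> (nat \<Rightarrow> 'd \<Rightarrow> 'd) \<Rightarrow> 'd \<Rightarrow> 'd \<Rightarrow> nat \<Rightarrow> 'd::real_vector \<times> 'd" where
  "ansgd \<mu> \<alpha> \<theta> \<eta> G x0 v0 0 = (x0, v0)"
| "ansgd \<mu> \<alpha> \<theta> \<eta> G x0 v0 (Suc t) =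
     (let x = fst (ansgd \<mu> \<alpha> \<theta> \<eta> G x0 v0 t); v = snd (ansgd \<mu> \<alpha> \<theta> \<eta> G x0 v0 t);
          y = ansgd_y \<mu> (\<alpha> t) (\<theta> t) x v; gr = G t y
      in (y - \<eta> t *\<^sub>R gr, (1 / (\<mu> + \<theta> t)) *\<^sub>R (\<theta> t *\<^sub>R v + \<mu> *\<^sub>R y - gr)))"


definition Fobj :: "'b measure \<Rightarrow> ('b \<Rightarrow> 'd \<Rightarrow> 'm::real_inner) \<Rightarrow> 'm set \<Rightarrow> ('m \<Rightarrow> real) \<Rightarrow> ('m \<Rightarrow> real)
                    \<Rightarrow> ('d \<Rightarrow> 'b \<Rightarrow> real) \<Rightarrow> 'd \<Rightarrow> real \<Rightarrow> real" where
  "Fobj P A U Q om g z c = (\<integral>s. fhat A U Q om c z s + g z s \<partial>P)"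

definition sgrad :: "('b \<Rightarrow> 'd::real_inner \<Rightarrow> 'm::real_inner) \<Rightarrow> 'm set \<Rightarrow> ('m \<Rightarrow> real) \<Rightarrow> ('m \<Rightarrow> real)
                    \<Rightarrow> ('d \<Rightarrow> 'b \<Rightarrow> real) \<Rightarrow> (nat \<Rightarrow> real) \<Rightarrow> (nat \<Rightarrow> 'w \<Rightarrow> 'b) \<Rightarrow> 'w \<Rightarrow> nat \<Rightarrow> 'd \<Rightarrow> 'd" where
  "sgrad A U Q om g \<gamma> \<xi> \<omega> k y =
     grad (\<lambda>z. fhat A U Q om (\<gamma> (Suc k)) z (\<xi> (Suc k) \<omega>)) y + grad (\<lambda>z. g z (\<xi> (Suc k) \<omega>)) y"

end

theory Submission
  imports Defs
begin

text \<open>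
  For fixed \<open>s\<close>, \<open>fhat(\<cdot>, s, \<gamma>)\<close> is a maximum over \<open>u \<in> U\<close> of functions that are
  \<open>\<gamma>\<zeta>\<close>-strongly concave in \<open>u\<close>; the (approximate) maximizer \<open>u\<^sup>*\<close> gives the gradient
  \<open>A\<^sup>* u\<^sup>*\<close> and a quadratic upper bound with constant \<open>\<parallel>A\<parallel>\<^sup>2 / (\<gamma>\<zeta>)\<close>, while lowering \<open>\<gamma>\<close> to
  \<open>\<gamma>'\<close> raises \<open>fhat\<close> by at most \<open>(\<gamma> - \<gamma>') D\<^sub>U\<close>.  Hence \<open>F(\<cdot>, \<gamma>\<^sub>t\<^sub>+\<^sub>1)\<close> is \<open>\<mu>\<close>-strongly convex and
  \<open>\<bbbE>L\<^sub>t\<^sub>+\<^sub>1\<close>-smooth, and the deterministic one-step estimate of accelerated gradient descent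
  holds along every sample path with the stochastic gradient in place of the true one.  Its error
  splits into a variance term, absorbed by Young's inequality using the slack
  \<open>\<mu> + \<theta>\<^sub>t - \<alpha>\<^sub>t \<bbbE>L\<^sub>t\<^sub>+\<^sub>1\<close>, and an inner product of the gradient noise with a point that depends
  only on \<open>\<xi>\<^sub>1,\<dots>,\<xi>\<^sub>t\<close>, which has mean zero because \<open>\<xi>\<^sub>t\<^sub>+\<^sub>1\<close> is independent of them.
  Taking expectations and passing from \<open>\<gamma>\<^sub>t\<^sub>+\<^sub>1\<close> back to \<open>\<gamma>\<^sub>t\<close> in \<open>\<Delta>\<^sub>t\<close> gives the claim.
\<close>

lemma grad_eqI:
  fixes f :: "'a::euclidean_space \<Rightarrow> real"
  assumes "GDERIV f z :> G"
  shows "grad f z = G"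
proof -
  have g: "GDERIV f z :> grad f z" unfolding grad_def using assms by (rule someI)
  have "(\<lambda>h. inner h (grad f z)) = (\<lambda>h. inner h G)"
    using has_derivative_unique[OF g[unfolded gderiv_def] assms[unfolded gderiv_def]] .
  then have "inner (grad f z - G) (grad f z) = inner (grad f z - G) G" by metis
  then have "inner (grad f z - G) (grad f z - G) = 0" by (simp add: inner_diff_right)
  then show ?thesis by simp
qed

lemma GDERIV_grad:
  fixes f :: "'a::euclidean_space \<Rightarrow> real"
  assumes "f differentiable (at z)"
  shows "GDERIV f z :> grad f z"
proof -
  obtain D where D: "(f has_derivative D) (at z)" using assms unfolding differentiable_def by blast
  have lin: "linear D" using D has_derivative_linear by blast
  define v where "v = (\<Sum>b\<in>Basis. D b *\<^sub>R b)"
  have "D h = inner h v" for h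
  proof -
    have "D h = D (\<Sum>b\<in>Basis. inner h b *\<^sub>R b)" by (simp add: euclidean_representation)
    also have "\<dots> = (\<Sum>b\<in>Basis. inner h b * D b)"
      using lin by (simp add: linear_sum linear_scale)
    also have "\<dots> = inner h v" by (simp add: v_def inner_sum_right mult.commute)
    finally show ?thesis .
  qed
  then have "D = (\<lambda>h. inner h v)" by auto
  then have "GDERIV f z :> v" using D by (simp add: gderiv_def)
  then show ?thesis unfolding grad_def by (rule someI)
qed

lemma GDERIV_quadratic_remainder:
  fixes f :: "'a::euclidean_space \<Rightarrow> real"
  assumes "\<And>d. \<bar>f (z + d) - f z - inner d G\<bar> \<le> K * (norm d)\<^sup>2"
  shows "GDERIV f z :> G"
  unfolding gderiv_def has_derivative_at
proof
  show "bounded_linear (\<lambda>h. inner h G)" by (rule bounded_linear_inner_left)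
  have "(\<lambda>h::'a. \<bar>K\<bar> * norm h) \<midarrow>0\<rightarrow> \<bar>K\<bar> * norm (0::'a)" by (intro tendsto_intros)
  then have lim: "(\<lambda>h::'a. \<bar>K\<bar> * norm h) \<midarrow>0\<rightarrow> 0" by simp
  show "(\<lambda>h. norm (f (z + h) - f z - inner h G) / norm h) \<midarrow>0\<rightarrow> 0"
  proof (rule Lim_null_comparison[OF always_eventually lim], intro allI)
    fix h :: 'a
    show "norm (norm (f (z + h) - f z - inner h G) / norm h) \<le> \<bar>K\<bar> * norm h"
    proof (cases "h = 0")
      case False
      have "\<bar>f (z + h) - f z - inner h G\<bar> \<le> \<bar>K\<bar> * (norm h * norm h)"
        using assms[of h] by (smt (verit) abs_ge_self mult_right_mono norm_ge_zero power2_eq_square zero_le_mult_iff)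
      then show ?thesis using False by (simp add: field_simps)
    qed simp
  qed
qed

lemma inner_le_young:
  fixes d e :: "'a::real_inner"
  assumes c: "c > 0"
  shows "inner d e \<le> c / 2 * (norm e)\<^sup>2 + (norm d)\<^sup>2 / (2 * c)"
proof -
  have "0 \<le> (norm (c *\<^sub>R e - d))\<^sup>2" by simp
  also have "\<dots> = inner (c *\<^sub>R e - d) (c *\<^sub>R e - d)" by (simp add: power2_norm_eq_inner)
  also have "\<dots> = c * c * inner e e - 2 * c * inner d e + inner d d"
    by (simp add: inner_diff_left inner_diff_right inner_commute[of e d] algebra_simps)
  also have "\<dots> = c\<^sup>2 * (norm e)\<^sup>2 - 2 * c * inner d e + (norm d)\<^sup>2"
    by (simp add: dot_square_norm power2_eq_square)
  finally have "2 * c * inner d e \<le> c\<^sup>2 * (norm e)\<^sup>2 + (norm d)\<^sup>2" by simp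
  then show ?thesis using c by (simp add: field_simps power2_eq_square)
qed

lemma abs_inner_le_half_sq:
  fixes d e :: "'a::real_inner"
  shows "\<bar>inner d e\<bar> \<le> (norm d)\<^sup>2 / 2 + (norm e)\<^sup>2 / 2"
  using inner_le_young[of 1 d e] inner_le_young[of 1 "- d" e] by (simp add: abs_le_iff)

lemma norm_sq_expand:
  fixes u v :: "'a::real_inner"
  shows "(norm (u + v))\<^sup>2 = (norm u)\<^sup>2 + 2 * inner u v + (norm v)\<^sup>2"
    and "(norm (u - v))\<^sup>2 = (norm u)\<^sup>2 - 2 * inner u v + (norm v)\<^sup>2"
  by (simp_all add: power2_norm_eq_inner inner_add_left inner_add_right inner_diff_left inner_diff_right
      inner_commute[of v u])

lemma norm_convex_comb_sq_le:
  fixes u v :: "'a::real_inner"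
  assumes "0 \<le> a" "a \<le> 1"
  shows "(norm ((1 - a) *\<^sub>R u + a *\<^sub>R v))\<^sup>2 \<le> (1 - a) * (norm u)\<^sup>2 + a * (norm v)\<^sup>2"
proof -
  have "(1 - a) * (norm u)\<^sup>2 + a * (norm v)\<^sup>2 - (norm ((1 - a) *\<^sub>R u + a *\<^sub>R v))\<^sup>2
        = a * (1 - a) * (norm (u - v))\<^sup>2"
    by (simp add: power2_norm_eq_inner inner_add_left inner_add_right inner_diff_left inner_diff_right
        inner_commute[of v u] algebra_simps)
  moreover have "0 \<le> a * (1 - a) * (norm (u - v))\<^sup>2" using assms by simp
  ultimately show ?thesis by linarith
qed

lemma norm_lincomb_sq_le:
  fixes u v :: "'a::real_inner"
  shows "(norm (p *\<^sub>R u + q *\<^sub>R v))\<^sup>2 \<le> 2 * p\<^sup>2 * (norm u)\<^sup>2 + 2 * q\<^sup>2 * (norm v)\<^sup>2"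
proof -
  have "2 * p\<^sup>2 * (norm u)\<^sup>2 + 2 * q\<^sup>2 * (norm v)\<^sup>2 - (norm (p *\<^sub>R u + q *\<^sub>R v))\<^sup>2
        = (norm (p *\<^sub>R u - q *\<^sub>R v))\<^sup>2"
    by (simp add: power2_norm_eq_inner inner_add_left inner_add_right inner_diff_left inner_diff_right
        inner_commute[of v u] algebra_simps) (simp add: power2_eq_square)
  then show ?thesis by (smt (verit) zero_le_power2)
qed

lemma le_of_le_plus_small:
  fixes a b k :: real
  assumes "\<And>t. 0 < t \<Longrightarrow> t < 1 \<Longrightarrow> a \<le> b + t * k" and "0 \<le> k"
  shows "a \<le> b"
proof (rule ccontr)
  assume "\<not> a \<le> b"
  then have ab: "a - b > 0" by simp
  define t where "t = min (1/2) ((a - b) / (2 * (k + 1)))"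
  have t: "0 < t" "t < 1" using ab assms(2) by (auto simp: t_def)
  have "t * k \<le> (a - b) / (2 * (k + 1)) * k" using assms(2) by (intro mult_right_mono) (auto simp: t_def)
  also have "\<dots> = (a - b) * (k / (2 * (k + 1)))" by simp
  also have "\<dots> < a - b"
    using ab assms(2) mult_strict_left_mono[of "k / (2 * (k + 1))" 1 "a - b"] by (simp add: field_simps)
  finally show False using assms(1)[OF t] by simp
qed

lemma strongly_convex_onD:
  assumes "strongly_convex_on U h c" "x \<in> U" "y \<in> U" "0 \<le> t" "t \<le> 1"
  shows "h ((1 - t) *\<^sub>R x + t *\<^sub>R y) \<le> (1 - t) * h x + t * h y - c / 2 * t * (1 - t) * (norm (x - y))\<^sup>2"
  using assms unfolding strongly_convex_on_def by blast

lemma strongly_convex_on_bdd_above_imp_bounded: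
  fixes U :: "'m::real_inner set"
  assumes cv: "convex U" and nn: "\<And>u. u \<in> U \<Longrightarrow> 0 \<le> om u" and c: "c > 0"
    and sc: "strongly_convex_on U om c" and bd: "bdd_above (om ` U)"
  shows "bounded U"
proof (cases "U = {}")
  case False
  then obtain u0 where u0: "u0 \<in> U" by auto
  define D where "D = Sup (om ` U)"
  have omD: "om u \<le> D" if "u \<in> U" for u using that bd unfolding D_def by (intro cSup_upper) auto
  have "norm (u - u0) \<le> sqrt (8 * D / c)" if u: "u \<in> U" for u
  proof -
    have "om ((1 - 1/2) *\<^sub>R u + (1/2) *\<^sub>R u0) \<le> (1 - 1/2) * om u + 1/2 * om u0 - c / 2 * (1/2) * (1 - 1/2) * (norm (u - u0))\<^sup>2"
      by (rule strongly_convex_onD[OF sc u u0]) auto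
    moreover have "(1 - 1/2) *\<^sub>R u + (1/2) *\<^sub>R u0 \<in> U" using cv u u0 by (intro convexD) auto
    ultimately have "c / 8 * (norm (u - u0))\<^sup>2 \<le> D" using nn omD[OF u] omD[OF u0] by fastforce
    then have "(norm (u - u0))\<^sup>2 \<le> 8 * D / c" using c by (simp add: field_simps)
    then show ?thesis by (simp add: real_le_rsqrt)
  qed
  then have "\<forall>u\<in>U. dist u0 u \<le> sqrt (8 * D / c)" by (simp add: dist_norm norm_minus_commute)
  then show ?thesis unfolding bounded_def by blast
qed simp

lemma convex_on_continuous_on_bdd_below:
  fixes U :: "'m::euclidean_space set"
  assumes cv: "convex U" and bdd: "bounded U" and Qc: "continuous_on U Q" and Qv: "convex_on U Q"
  shows "bdd_below (Q ` U)"
proof (cases "U = {}")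
  case False
  obtain R where R: "\<forall>u\<in>U. norm u \<le> R" using bdd bounded_iff by blast
  obtain a where a: "a \<in> rel_interior U" using rel_interior_eq_empty[OF cv] False by blast
  then obtain e where aU: "a \<in> U" and e: "e > 0" and eb: "ball a e \<inter> affine hull U \<subseteq> U"
    unfolding mem_rel_interior_ball by blast
  obtain d where d: "d > 0" and dd: "\<And>u. u \<in> U \<Longrightarrow> dist u a < d \<Longrightarrow> dist (Q u) (Q a) < 1"
    using Qc aU unfolding continuous_on_iff by (meson zero_less_one)
  have R0: "0 \<le> R" using R aU norm_ge_zero order_trans by blast
  define s where "s = min e d / (2 * (2 * R + 1))"
  have s0: "s > 0" using e d R0 by (simp add: s_def)
  have "Q a - 1 / s \<le> Q u" if u: "u \<in> U" for u
  proof -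
    \<comment> \<open>reflect u through a, staying in the relative interior where Q is bounded by continuity\<close>
    define b where "b = (1 + s) *\<^sub>R a + (- s) *\<^sub>R u"
    have baff: "b \<in> affine hull U"
      unfolding b_def by (rule mem_affine) (use aU u hull_subset[of U affine] in auto)
    have "b - a = s *\<^sub>R (a - u)" by (simp add: b_def algebra_simps)
    then have nb: "norm (b - a) = s * norm (a - u)" using s0 by simp
    have "norm (a - u) \<le> 2 * R" using R aU u norm_triangle_ineq4[of a u] by (smt (verit))
    then have "s * norm (a - u) \<le> s * (2 * R)" using s0 by (intro mult_left_mono) auto
    also have "\<dots> < s * (2 * (2 * R + 1))" using s0 R0 by simp
    also have "\<dots> = min e d" using R0 by (simp add: s_def)
    finally have bd: "dist b a < min e d" using nb by (simp add: dist_norm)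
    have bU: "b \<in> U" using eb baff bd by (auto simp: dist_commute)
    have Qb: "Q b < Q a + 1" using dd[OF bU] bd by (auto simp: dist_real_def)
    define t where "t = s / (1 + s)"
    have t0: "0 \<le> t" "t \<le> 1" "t > 0" using s0 by (auto simp: t_def)
    have "(1 - t) *\<^sub>R b + t *\<^sub>R u = a"
      using s0 by (simp add: t_def b_def algebra_simps divide_simps scaleR_left_distrib[symmetric])
    then have "Q a \<le> (1 - t) * Q b + t * Q u" using convex_onD[OF Qv t0(1,2) bU u] by simp
    also have "\<dots> \<le> (1 - t) * (Q a + 1) + t * Q u" using Qb t0 by (intro add_right_mono mult_left_mono) auto
    finally have "Q a - (1 - t) / t \<le> Q u" using t0 by (simp add: field_simps)
    moreover have "(1 - t) / t = 1 / s" using s0 by (simp add: t_def field_simps)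
    ultimately show ?thesis by simp
  qed
  then show ?thesis by (intro bdd_belowI2)
qed simp

lemma strongly_concave_near_maximizers_close:
  assumes sc: "strongly_convex_on U (\<lambda>u. - h u) c" and cv: "convex U" and bdd: "bdd_above (h ` U)"
    and x: "x \<in> U" and y: "y \<in> U" and c: "c > 0"
    and hx: "Sup (h ` U) - e \<le> h x" and hy: "Sup (h ` U) - e \<le> h y"
  shows "(norm (x - y))\<^sup>2 \<le> 8 * e / c"
proof -
  have "(1 - 1/2) *\<^sub>R x + (1/2) *\<^sub>R y \<in> U" using cv x y by (intro convexD) auto
  then have "h ((1 - 1/2) *\<^sub>R x + (1/2) *\<^sub>R y) \<le> Sup (h ` U)" using bdd by (intro cSup_upper) auto
  moreover have "- h ((1 - 1/2) *\<^sub>R x + (1/2) *\<^sub>R y)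
      \<le> (1 - 1/2) * - h x + 1/2 * - h y - c / 2 * (1/2) * (1 - 1/2) * (norm (x - y))\<^sup>2"
    by (rule strongly_convex_onD[OF sc x y]) auto
  ultimately show ?thesis using hx hy c by (simp add: field_simps)
qed

lemma strongly_concave_maximizing_limit:
  fixes h :: "'m::euclidean_space \<Rightarrow> real"
  assumes sc: "strongly_convex_on U (\<lambda>u. - h u) c" and cv: "convex U" and ne: "U \<noteq> {}"
    and bdd: "bdd_above (h ` U)" and c: "c > 0"
  obtains u us where "\<And>n. u n \<in> U" "u \<longlonglongrightarrow> us" "(\<lambda>n. h (u n)) \<longlonglongrightarrow> Sup (h ` U)"
    "\<And>v. v \<in> U \<Longrightarrow> h v \<le> Sup (h ` U) - c / 2 * (norm (us - v))\<^sup>2"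
proof -
  let ?S = "Sup (h ` U)"
  define ep :: "nat \<Rightarrow> real" where "ep n = inverse (real (Suc n))" for n
  have ep0: "ep \<longlonglongrightarrow> 0" unfolding ep_def by (rule LIMSEQ_inverse_real_of_nat)
  have "\<exists>u\<in>U. ?S - ep n < h u" for n
    using less_cSup_iff[of "h ` U" "?S - ep n"] bdd ne by (auto simp: ep_def)
  then obtain u where uU: "\<And>n. u n \<in> U" and uh: "\<And>n. ?S - ep n < h (u n)" by metis
  have le_S: "h v \<le> ?S" if "v \<in> U" for v using bdd that by (intro cSup_upper) auto
  have "Cauchy u"
  proof (rule metric_CauchyI)
    fix e :: real assume e: "e > 0"
    obtain N :: nat where "8 / (c * e\<^sup>2) < real N" using reals_Archimedean2 by blast
    then have N: "8 / (c * e\<^sup>2) < real (Suc N)" by simp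
    have "dist (u m) (u n) < e" if "m \<ge> N" "n \<ge> N" for m n
    proof -
      have "ep m \<le> ep N" "ep n \<le> ep N" using that by (auto simp: ep_def field_simps)
      then have "(norm (u m - u n))\<^sup>2 \<le> 8 * ep N / c"
        using strongly_concave_near_maximizers_close[OF sc cv bdd uU uU c, of "ep N" m n] uh[of m] uh[of n]
        by fastforce
      also have "\<dots> = 8 / (c * real (Suc N))" by (simp add: ep_def divide_inverse)
      also have "\<dots> < e\<^sup>2"
        using N c e by (simp add: pos_divide_less_eq pos_less_divide_eq mult.commute mult.left_commute)
      finally show ?thesis using e by (simp add: dist_norm) (smt (verit) norm_ge_zero power_mono)
    qed
    then show "\<exists>M. \<forall>m\<ge>M. \<forall>n\<ge>M. dist (u m) (u n) < e" by blast
  qed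
  then obtain us where us: "u \<longlonglongrightarrow> us" using Cauchy_convergent_iff convergent_def by blast
  have "(\<lambda>n. ?S - ep n) \<longlonglongrightarrow> ?S - 0" by (intro tendsto_intros ep0)
  have hu: "(\<lambda>n. h (u n)) \<longlonglongrightarrow> ?S"
  proof (rule tendsto_sandwich[where f = "\<lambda>n. ?S - ep n" and h = "\<lambda>_. ?S"])
    show "\<forall>\<^sub>F n in sequentially. ?S - ep n \<le> h (u n)" using uh by (simp add: less_imp_le)
    show "\<forall>\<^sub>F n in sequentially. h (u n) \<le> ?S" using le_S uU by simp
  qed (use \<open>(\<lambda>n. ?S - ep n) \<longlonglongrightarrow> ?S - 0\<close> in simp_all)
  have "h v \<le> ?S - c / 2 * (norm (us - v))\<^sup>2" if v: "v \<in> U" for v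
  proof (rule le_of_le_plus_small[where k = "c / 2 * (norm (us - v))\<^sup>2"])
    fix t :: real assume t: "0 < t" "t < 1"
    have "t * h v \<le> ?S - (1 - t) * h (u n) - c / 2 * t * (1 - t) * (norm (u n - v))\<^sup>2" for n
      using strongly_convex_onD[OF sc uU v, of t n] le_S[OF convexD[OF cv uU v, of "1 - t" t n]] t
      by simp
    moreover have "(\<lambda>n. ?S - (1 - t) * h (u n) - c / 2 * t * (1 - t) * (norm (u n - v))\<^sup>2)
                 \<longlonglongrightarrow> ?S - (1 - t) * ?S - c / 2 * t * (1 - t) * (norm (us - v))\<^sup>2"
      by (intro tendsto_intros hu us)
    ultimately have "t * h v \<le> t * (?S - c / 2 * (1 - t) * (norm (us - v))\<^sup>2)"
      by (intro LIMSEQ_le_const) (auto simp: algebra_simps)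
    then have "h v \<le> ?S - c / 2 * (1 - t) * (norm (us - v))\<^sup>2" using t by (simp add: mult_le_cancel_left_pos)
    then show "h v \<le> ?S - c / 2 * (norm (us - v))\<^sup>2 + t * (c / 2 * (norm (us - v))\<^sup>2)"
      by (simp add: algebra_simps diff_divide_distrib)
  qed (use c in simp)
  then show ?thesis using that uU us hu by blast
qed

lemma strongly_convex_on_smoothing:
  assumes Qv: "convex_on U Q" and sc: "strongly_convex_on U om \<zeta>" and g: "0 \<le> \<gamma>"
  shows "strongly_convex_on U (\<lambda>u. - (inner w u - Q u - \<gamma> * om u)) (\<gamma> * \<zeta>)"
  unfolding strongly_convex_on_def
proof (intro ballI allI impI)
  fix x y and t :: real assume x: "x \<in> U" and y: "y \<in> U" and t: "0 \<le> t \<and> t \<le> 1"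
  have "Q ((1 - t) *\<^sub>R x + t *\<^sub>R y) \<le> (1 - t) * Q x + t * Q y" using convex_onD[OF Qv _ _ x y] t by simp
  moreover have "\<gamma> * om ((1 - t) *\<^sub>R x + t *\<^sub>R y)
      \<le> \<gamma> * ((1 - t) * om x + t * om y - \<zeta> / 2 * t * (1 - t) * (norm (x - y))\<^sup>2)"
    using mult_left_mono[OF strongly_convex_onD[OF sc x y] g] t by simp
  ultimately show "- (inner w ((1 - t) *\<^sub>R x + t *\<^sub>R y) - Q ((1 - t) *\<^sub>R x + t *\<^sub>R y) - \<gamma> * om ((1 - t) *\<^sub>R x + t *\<^sub>R y))
      \<le> (1 - t) * - (inner w x - Q x - \<gamma> * om x) + t * - (inner w y - Q y - \<gamma> * om y)
         - \<gamma> * \<zeta> / 2 * t * (1 - t) * (norm (x - y))\<^sup>2"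
    by (simp add: inner_add_right algebra_simps)
qed

lemma smoothed_max_quadratic_bounds:
  fixes U :: "'m::euclidean_space set" and Q om :: "'m \<Rightarrow> real"
  assumes cv: "convex U" and ne: "U \<noteq> {}" and Qv: "convex_on U Q"
    and sc: "strongly_convex_on U om \<zeta>" and z: "\<zeta> > 0" and g: "\<gamma> > 0"
    and R: "\<forall>u\<in>U. norm u \<le> R" and B: "\<forall>u\<in>U. B \<le> Q u" and nn: "\<forall>u\<in>U. 0 \<le> om u"
  defines "\<phi> \<equiv> \<lambda>w. Sup ((\<lambda>u. inner w u - Q u - \<gamma> * om u) ` U)"
  shows "\<exists>u. norm u \<le> R \<and> (\<forall>w'. \<phi> w + inner (w' - w) u \<le> \<phi> w')
            \<and> (\<forall>w'. \<phi> w' \<le> \<phi> w + inner (w' - w) u + (norm (w' - w))\<^sup>2 / (2 * (\<gamma> * \<zeta>)))"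
proof -
  define val where "val w u = inner w u - Q u - \<gamma> * om u" for w u
  have phi: "\<phi> w = Sup (val w ` U)" for w by (simp add: \<phi>_def val_def)
  have bdd: "bdd_above (val w ` U)" for w
  proof (rule bdd_aboveI2)
    fix u assume u: "u \<in> U"
    have "inner w u \<le> norm w * R"
      using Cauchy_Schwarz_ineq2[of w u] R u by (smt (verit) mult_left_mono norm_ge_zero)
    then show "val w u \<le> norm w * R - B" using B nn u g unfolding val_def
      by (smt (verit) mult_nonneg_nonneg)
  qed
  have le_phi: "val w u \<le> \<phi> w" if "u \<in> U" for w u
    unfolding phi using that bdd by (intro cSup_upper) auto
  have sc_val: "strongly_convex_on U (\<lambda>u. - val w u) (\<gamma> * \<zeta>)"
    unfolding val_def using strongly_convex_on_smoothing[OF Qv sc] g by simp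
  obtain u us where uU: "\<And>n. u n \<in> U" and us: "u \<longlonglongrightarrow> us"
    and hu: "(\<lambda>n. val w (u n)) \<longlonglongrightarrow> \<phi> w"
    and growth: "\<And>v. v \<in> U \<Longrightarrow> val w v \<le> \<phi> w - \<gamma> * \<zeta> / 2 * (norm (us - v))\<^sup>2"
    using strongly_concave_maximizing_limit[OF sc_val cv ne bdd] z g unfolding phi by auto
  have "norm us \<le> R"
    by (rule LIMSEQ_le_const2[OF tendsto_norm[OF us]]) (use R uU in auto)
  moreover have "\<phi> w + inner (w' - w) us \<le> \<phi> w'" for w'
  proof (rule LIMSEQ_le_const2)
    show "(\<lambda>n. val w (u n) + inner (w' - w) (u n)) \<longlonglongrightarrow> \<phi> w + inner (w' - w) us"
      by (intro tendsto_intros hu us)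
    show "\<exists>N. \<forall>n\<ge>N. val w (u n) + inner (w' - w) (u n) \<le> \<phi> w'"
      using le_phi[OF uU, of w'] by (simp add: val_def inner_diff_left algebra_simps)
  qed
  moreover have "\<phi> w' \<le> \<phi> w + inner (w' - w) us + (norm (w' - w))\<^sup>2 / (2 * (\<gamma> * \<zeta>))" for w'
    unfolding phi[of w']
  proof (rule cSup_least)
    show "val w' ` U \<noteq> {}" using ne by simp
    fix r assume "r \<in> val w' ` U"
    then obtain v where v: "v \<in> U" and r: "r = val w' v" by auto
    have "val w' v = val w v + inner (w' - w) us + inner (w' - w) (v - us)"
      by (simp add: val_def inner_diff_left inner_diff_right)
    also have "\<dots> \<le> (\<phi> w - \<gamma> * \<zeta> / 2 * (norm (us - v))\<^sup>2) + inner (w' - w) us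
                     + (\<gamma> * \<zeta> / 2 * (norm (v - us))\<^sup>2 + (norm (w' - w))\<^sup>2 / (2 * (\<gamma> * \<zeta>)))"
      using growth[OF v] inner_le_young[of "\<gamma> * \<zeta>" "w' - w" "v - us"] z g by simp
    finally show "r \<le> \<phi> w + inner (w' - w) us + (norm (w' - w))\<^sup>2 / (2 * (\<gamma> * \<zeta>))"
      using r by (simp add: norm_minus_commute)
  qed
  ultimately show ?thesis by blast
qed

lemma opnorm_nonneg_bound:
  fixes A :: "'d::euclidean_space \<Rightarrow> 'm::euclidean_space"
  assumes lin: "linear A"
  shows "0 \<le> opnorm A" and "norm (A x) \<le> opnorm A * norm x"
proof -
  define S where "S = {inner (A x) u | x u. norm x = 1 \<and> norm u = 1}"
  have op: "opnorm A = Sup S" by (simp add: opnorm_def S_def)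
  obtain K where K: "\<And>x. norm (A x) \<le> norm x * K"
    using linear_conv_bounded_linear[of A] lin bounded_linear.bounded by blast
  have bdd: "bdd_above S"
  proof (rule bdd_aboveI[where M = K])
    fix r assume "r \<in> S"
    then obtain x u where r: "r = inner (A x) u" and x: "norm x = 1" and u: "norm u = 1"
      unfolding S_def by blast
    have "inner (A x) u \<le> norm (A x) * norm u" by (rule Cauchy_Schwarz_ineq2[THEN order_trans[OF abs_ge_self]])
    then show "r \<le> K" using K[of x] x u r by simp
  qed
  have inS: "inner (A x) u \<le> Sup S" if "norm x = 1" "norm u = 1" for x u
    using that bdd by (intro cSup_upper) (auto simp: S_def)
  obtain e :: 'd where e: "e \<in> Basis" using nonempty_Basis by blast
  obtain f :: 'm where f: "f \<in> Basis" using nonempty_Basis by blast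
  have "inner (A e) f \<le> Sup S" "inner (A e) (-f) \<le> Sup S" using inS[of e f] inS[of e "-f"] e f by auto
  then show "0 \<le> opnorm A" unfolding op by simp
  show "norm (A x) \<le> opnorm A * norm x"
  proof (cases "x = 0 \<or> A x = 0")
    case True
    then show ?thesis using \<open>0 \<le> opnorm A\<close> lin by (auto simp: linear_0)
  next
    case False
    then have x0: "x \<noteq> 0" and ax0: "A x \<noteq> 0" by auto
    have "inner (A ((1 / norm x) *\<^sub>R x)) ((1 / norm (A x)) *\<^sub>R A x) \<le> Sup S"
      using x0 ax0 by (intro inS) auto
    moreover have "inner (A ((1 / norm x) *\<^sub>R x)) ((1 / norm (A x)) *\<^sub>R A x) = norm (A x) / norm x"
      using x0 ax0 lin by (simp add: linear_scale dot_square_norm power2_eq_square)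
    ultimately have "norm (A x) / norm x \<le> Sup S" by simp
    then show ?thesis using x0 by (simp add: op pos_divide_le_eq mult.commute)
  qed
qed

locale smoothed_loss =
  fixes P :: "'b measure" and A :: "'b \<Rightarrow> 'd::euclidean_space \<Rightarrow> 'm::euclidean_space"
    and U :: "'m set" and Q om :: "'m \<Rightarrow> real" and \<zeta> R B DU :: real
    and g :: "'d \<Rightarrow> 'b \<Rightarrow> real" and Lg \<mu> :: real
  assumes P: "prob_space P"
    and U_convex: "convex U" and U_ne: "U \<noteq> {}" and Q_convex: "convex_on U Q"
    and om_nonneg: "\<And>u. u \<in> U \<Longrightarrow> 0 \<le> om u"
    and zeta_pos: "\<zeta> > 0" and om_sc: "strongly_convex_on U om \<zeta>"
    and om_bdd: "bdd_above (om ` U)" and DU_def: "DU = Sup (om ` U)"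
    and A_lin: "\<And>s. linear (A s)"
    and A_sq_int: "integrable P (\<lambda>s. (opnorm (A s))\<^sup>2)"
    and U_radius: "\<forall>u\<in>U. norm u \<le> R" and Q_lower: "\<forall>u\<in>U. B \<le> Q u"
    and g_int: "\<And>z. integrable P (g z)"
    and g_grad_meas: "(\<lambda>p. grad (\<lambda>z. g z (snd p)) (fst p)) \<in> borel_measurable (borel \<Otimes>\<^sub>M P)"
    and g_grad_unbiased: "\<And>z. integrable P (\<lambda>s. grad (\<lambda>z. g z s) z)
                               \<and> (\<integral>s. grad (\<lambda>z. g z s) z \<partial>P) = grad (\<lambda>z. \<integral>s. g z s \<partial>P) z"
    and gbar_diff: "\<And>z. (\<lambda>z. \<integral>s. g z s \<partial>P) differentiable (at z)"
    and gbar_smooth: "\<And>x y. (\<integral>s. g x s \<partial>P) \<le> (\<integral>s. g y s \<partial>P) + inner (grad (\<lambda>z. \<integral>s. g z s \<partial>P) y) (x - y) + Lg / 2 * (norm (x - y))\<^sup>2"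
    and gbar_sc: "\<And>x y. (\<integral>s. g x s \<partial>P) \<ge> (\<integral>s. g y s \<partial>P) + inner (grad (\<lambda>z. \<integral>s. g z s \<partial>P) y) (x - y) + \<mu> / 2 * (norm (x - y))\<^sup>2"
    and fhat_int: "\<And>z c. c > 0 \<Longrightarrow> integrable P (fhat A U Q om c z)"
    and fhat_grad_meas: "\<And>c. c > 0 \<Longrightarrow>
          (\<lambda>p. grad (\<lambda>z. fhat A U Q om c z (snd p)) (fst p)) \<in> borel_measurable (borel \<Otimes>\<^sub>M P)"
begin

abbreviation "gbar \<equiv> \<lambda>z. \<integral>s. g z s \<partial>P"
abbreviation "fh c z s \<equiv> fhat A U Q om c z s"
abbreviation "gf c z s \<equiv> grad (\<lambda>z. fhat A U Q om c z s) z"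
abbreviation "F c z \<equiv> Fobj P A U Q om g z c"

definition "fhat_mean c z = (\<integral>s. fh c z s \<partial>P)"
definition "fhat_grad_mean c z = (\<integral>s. gf c z s \<partial>P)"
definition "opnorm_sq_mean = (\<integral>s. (opnorm (A s))\<^sup>2 \<partial>P)"

\<comment> \<open>Lipschitz constant of the gradient of \<open>F c\<close>; the paper's \<open>\<bbbE>L\<^sub>t\<^sub>+\<^sub>1\<close> for \<open>c = \<gamma>\<^sub>t\<^sub>+\<^sub>1\<close>\<close>
definition "smoothness c = Lg + opnorm_sq_mean / (c * \<zeta>)"

lemma fhat_bdd_above: "0 \<le> c \<Longrightarrow> bdd_above ((\<lambda>u. inner w u - Q u - c * om u) ` U)"
proof (rule bdd_aboveI2)
  fix u assume c: "0 \<le> c" and u: "u \<in> U"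
  have "inner w u \<le> norm w * R"
    using Cauchy_Schwarz_ineq2[of w u] U_radius u by (smt (verit) mult_left_mono norm_ge_zero)
  then show "inner w u - Q u - c * om u \<le> norm w * R - B" using Q_lower om_nonneg[OF u] u c
    by (smt (verit) mult_nonneg_nonneg)
qed

lemma fhat_smoothing_shift:
  assumes c': "0 < c'" "c' \<le> c"
  shows "fh c z s \<le> fh c' z s" and "fh c' z s \<le> fh c z s + (c - c') * DU"
proof -
  let ?S = "\<lambda>c. (\<lambda>u. inner (A s z) u - Q u - c * om u) ` U"
  have b: "bdd_above (?S c)" "bdd_above (?S c')" using fhat_bdd_above c' by auto
  show "fh c z s \<le> fh c' z s" unfolding fhat_def
  proof (rule cSup_least)
    show "?S c \<noteq> {}" using U_ne by simp
    fix r assume "r \<in> ?S c"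
    then obtain u where u: "u \<in> U" and r: "r = inner (A s z) u - Q u - c * om u" by auto
    have "r \<le> inner (A s z) u - Q u - c' * om u" using r c' om_nonneg[OF u]
      by (simp add: mult_right_mono)
    also have "\<dots> \<le> Sup (?S c')" using b u by (intro cSup_upper) auto
    finally show "r \<le> Sup (?S c')" .
  qed
  show "fh c' z s \<le> fh c z s + (c - c') * DU" unfolding fhat_def
  proof (rule cSup_least)
    show "?S c' \<noteq> {}" using U_ne by simp
    fix r assume "r \<in> ?S c'"
    then obtain u where u: "u \<in> U" and r: "r = inner (A s z) u - Q u - c' * om u" by auto
    have "om u \<le> DU" unfolding DU_def using om_bdd u by (intro cSup_upper) auto
    then have "(c - c') * om u \<le> (c - c') * DU" using c' by (intro mult_left_mono) auto
    then have "r \<le> (inner (A s z) u - Q u - c * om u) + (c - c') * DU" using r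
      by (simp add: algebra_simps)
    also have "\<dots> \<le> Sup (?S c) + (c - c') * DU" using b u by (intro add_right_mono cSup_upper) auto
    finally show "r \<le> Sup (?S c) + (c - c') * DU" .
  qed
qed

lemma fhat_linearization_bounds:
  assumes c: "c > 0"
  obtains G where "norm G \<le> opnorm (A s) * R"
    and "\<And>z'. 0 \<le> fh c z' s - fh c z s - inner G (z' - z)"
    and "\<And>z'. fh c z' s - fh c z s - inner G (z' - z) \<le> (opnorm (A s))\<^sup>2 / (2 * (c * \<zeta>)) * (norm (z' - z))\<^sup>2"
proof -
  obtain u where nu: "norm u \<le> R"
    and lo: "\<And>w'. fh c z s + inner (w' - A s z) u \<le> Sup ((\<lambda>u. inner w' u - Q u - c * om u) ` U)"
    and up: "\<And>w'. Sup ((\<lambda>u. inner w' u - Q u - c * om u) ` U)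
               \<le> fh c z s + inner (w' - A s z) u + (norm (w' - A s z))\<^sup>2 / (2 * (c * \<zeta>))"
    using smoothed_max_quadratic_bounds[OF U_convex U_ne Q_convex om_sc zeta_pos c U_radius Q_lower, of "A s z"]
      om_nonneg unfolding fhat_def by blast
  \<comment> \<open>the gradient is the adjoint of \<open>A s\<close> applied to the (approximate) maximizer \<open>u\<close>\<close>
  define G where "G = adjoint (A s) u"
  have adj: "inner (A s d) u = inner d G" for d unfolding G_def using adjoint_works[OF A_lin[of s]] by simp
  have op: "norm (A s d) \<le> opnorm (A s) * norm d" "0 \<le> opnorm (A s)" for d
    using opnorm_nonneg_bound[OF A_lin[of s]] by auto
  have "(norm G)\<^sup>2 = inner (A s G) u" by (simp add: adj power2_norm_eq_inner)
  also have "\<dots> \<le> norm (A s G) * norm u" by (rule Cauchy_Schwarz_ineq2[THEN order_trans[OF abs_ge_self]])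
  also have "\<dots> \<le> (opnorm (A s) * norm G) * R"
    using op(1)[of G] op(2) nu by (intro mult_mono) auto
  finally have "norm G * norm G \<le> norm G * (opnorm (A s) * R)" by (simp add: power2_eq_square algebra_simps)
  then have "norm G \<le> opnorm (A s) * R"
    using op(2) nu by (cases "norm G = 0") (auto simp: mult_le_cancel_left, smt (verit) mult_nonneg_nonneg norm_ge_zero)
  moreover have "0 \<le> fh c z' s - fh c z s - inner G (z' - z) \<and>
        fh c z' s - fh c z s - inner G (z' - z) \<le> (opnorm (A s))\<^sup>2 / (2 * (c * \<zeta>)) * (norm (z' - z))\<^sup>2" for z'
  proof -
    have Az: "A s z' - A s z = A s (z' - z)" using A_lin[of s] by (simp add: linear_diff)
    have "inner (A s z' - A s z) u = inner G (z' - z)" using Az adj by (simp add: inner_commute)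
    moreover have "(norm (A s (z' - z)))\<^sup>2 \<le> (opnorm (A s) * norm (z' - z))\<^sup>2"
      using op(1)[of "z' - z"] op(2) by (intro power_mono) auto
    then have "(norm (A s (z' - z)))\<^sup>2 / (2 * (c * \<zeta>)) \<le> (opnorm (A s))\<^sup>2 / (2 * (c * \<zeta>)) * (norm (z' - z))\<^sup>2"
      using c zeta_pos by (simp add: divide_right_mono power_mult_distrib)
    ultimately show ?thesis using lo[of "A s z'"] up[of "A s z'"] Az by (auto simp: fhat_def)
  qed
  ultimately show ?thesis using that by blast
qed

lemma fhat_grad:
  assumes c: "c > 0"
  shows "norm (gf c z s) \<le> opnorm (A s) * R"
    and "0 \<le> fh c z' s - fh c z s - inner (gf c z s) (z' - z)"
    and "fh c z' s - fh c z s - inner (gf c z s) (z' - z) \<le> (opnorm (A s))\<^sup>2 / (2 * (c * \<zeta>)) * (norm (z' - z))\<^sup>2"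
proof -
  obtain G where nG: "norm G \<le> opnorm (A s) * R"
    and lo: "\<And>z'. 0 \<le> fh c z' s - fh c z s - inner G (z' - z)"
    and up: "\<And>z'. fh c z' s - fh c z s - inner G (z' - z) \<le> (opnorm (A s))\<^sup>2 / (2 * (c * \<zeta>)) * (norm (z' - z))\<^sup>2"
    using fhat_linearization_bounds[OF c] by blast
  have "GDERIV (\<lambda>z. fh c z s) z :> G"
  proof (rule GDERIV_quadratic_remainder[where K = "(opnorm (A s))\<^sup>2 / (2 * (c * \<zeta>))"])
    fix d show "\<bar>fh c (z + d) s - fh c z s - inner d G\<bar> \<le> (opnorm (A s))\<^sup>2 / (2 * (c * \<zeta>)) * (norm d)\<^sup>2"
      using lo[of "z + d"] up[of "z + d"] by (simp add: inner_commute)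
  qed
  then have "gf c z s = G" by (rule grad_eqI)
  then show "norm (gf c z s) \<le> opnorm (A s) * R"
    and "0 \<le> fh c z' s - fh c z s - inner (gf c z s) (z' - z)"
    and "fh c z' s - fh c z s - inner (gf c z s) (z' - z) \<le> (opnorm (A s))\<^sup>2 / (2 * (c * \<zeta>)) * (norm (z' - z))\<^sup>2"
    using nG lo up by simp_all
qed

lemma opnorm_integrable: "integrable P (\<lambda>s. opnorm (A s))"
proof (rule Bochner_Integration.integrable_bound[where f = "\<lambda>s. (opnorm (A s))\<^sup>2 + 1"])
  interpret prob_space P by (rule P)
  show "integrable P (\<lambda>s. (opnorm (A s))\<^sup>2 + 1)" using A_sq_int by simp
  have "(\<lambda>s. sqrt ((opnorm (A s))\<^sup>2)) \<in> borel_measurable P" using A_sq_int by measurable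
  moreover have "sqrt ((opnorm (A s))\<^sup>2) = opnorm (A s)" for s
    using opnorm_nonneg_bound(1)[OF A_lin[of s]] by simp
  ultimately show "(\<lambda>s. opnorm (A s)) \<in> borel_measurable P" by simp
  have "\<bar>r\<bar> \<le> r\<^sup>2 + 1" for r :: real
    using zero_le_power2[of "\<bar>r\<bar> - 1"] by (simp add: power2_diff)
  then show "AE s in P. norm (opnorm (A s)) \<le> norm ((opnorm (A s))\<^sup>2 + 1)"
    by (intro AE_I2) (smt (verit) real_norm_def zero_le_power2)
qed

lemma stoch_grad_measurable:
  assumes c: "c > 0"
  shows "(\<lambda>p. gf c (fst p) (snd p) + grad (\<lambda>z. g z (snd p)) (fst p)) \<in> borel_measurable (borel \<Otimes>\<^sub>M P)"
  using fhat_grad_meas[OF c] g_grad_meas by (intro borel_measurable_add) auto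

lemma fhat_grad_integrable:
  assumes c: "c > 0"
  shows "integrable P (\<lambda>s. gf c z s)"
proof -
  have "(\<lambda>s. (z, s)) \<in> P \<rightarrow>\<^sub>M borel \<Otimes>\<^sub>M P" by simp
  from measurable_compose[OF this fhat_grad_meas[OF c]]
  have meas: "(\<lambda>s. gf c z s) \<in> borel_measurable P" by simp
  show ?thesis
  proof (rule Bochner_Integration.integrable_bound[OF _ meas])
    show "integrable P (\<lambda>s. opnorm (A s) * R)" using opnorm_integrable by simp
    show "AE s in P. norm (gf c z s) \<le> norm (opnorm (A s) * R)"
    proof (rule AE_I2)
      fix s
      have "norm (gf c z s) \<le> opnorm (A s) * R" by (rule fhat_grad(1)[OF c])
      then show "norm (gf c z s) \<le> norm (opnorm (A s) * R)" by simp
    qed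
  qed
qed

lemma fhat_mean_linearization_bounds:
  assumes c: "c > 0"
  shows "0 \<le> fhat_mean c z' - fhat_mean c z - inner (fhat_grad_mean c z) (z' - z)"
    and "fhat_mean c z' - fhat_mean c z - inner (fhat_grad_mean c z) (z' - z) \<le> opnorm_sq_mean / (2 * (c * \<zeta>)) * (norm (z' - z))\<^sup>2"
proof -
  have i1: "integrable P (\<lambda>s. inner (gf c z s) (z' - z))" using fhat_grad_integrable[OF c] by simp
  have eq: "fhat_mean c z' - fhat_mean c z - inner (fhat_grad_mean c z) (z' - z)
          = (\<integral>s. fh c z' s - fh c z s - inner (gf c z s) (z' - z) \<partial>P)"
    unfolding fhat_mean_def fhat_grad_mean_def
    using fhat_int[OF c] fhat_grad_integrable[OF c] i1 by (simp add: integral_inner_left)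
  show "0 \<le> fhat_mean c z' - fhat_mean c z - inner (fhat_grad_mean c z) (z' - z)"
    unfolding eq using fhat_grad(2)[OF c] by (intro integral_nonneg_AE AE_I2) auto
  have "(\<integral>s. fh c z' s - fh c z s - inner (gf c z s) (z' - z) \<partial>P)
        \<le> (\<integral>s. (opnorm (A s))\<^sup>2 / (2 * (c * \<zeta>)) * (norm (z' - z))\<^sup>2 \<partial>P)"
    using fhat_int[OF c] i1 A_sq_int fhat_grad(3)[OF c] by (intro integral_mono) auto
  also have "\<dots> = opnorm_sq_mean / (2 * (c * \<zeta>)) * (norm (z' - z))\<^sup>2"
    unfolding opnorm_sq_mean_def using A_sq_int by simp
  finally show "fhat_mean c z' - fhat_mean c z - inner (fhat_grad_mean c z) (z' - z) \<le> opnorm_sq_mean / (2 * (c * \<zeta>)) * (norm (z' - z))\<^sup>2"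
    using eq by simp
qed

lemma opnorm_sq_mean_nonneg: "0 \<le> opnorm_sq_mean"
  unfolding opnorm_sq_mean_def by (intro integral_nonneg_AE AE_I2) auto

lemma F_eq_fhat_mean_add_gbar: "c > 0 \<Longrightarrow> F c z = fhat_mean c z + gbar z"
  unfolding Fobj_def fhat_mean_def using fhat_int g_int by simp

lemma F_GDERIV:
  assumes c: "c > 0"
  shows "GDERIV (F c) z :> fhat_grad_mean c z + grad gbar z"
proof -
  have "GDERIV (fhat_mean c) z :> fhat_grad_mean c z"
  proof (rule GDERIV_quadratic_remainder[where K = "opnorm_sq_mean / (2 * (c * \<zeta>))"])
    fix d
    show "\<bar>fhat_mean c (z + d) - fhat_mean c z - inner d (fhat_grad_mean c z)\<bar> \<le> opnorm_sq_mean / (2 * (c * \<zeta>)) * (norm d)\<^sup>2"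
      using fhat_mean_linearization_bounds[OF c, of "z + d" z] by (simp add: inner_commute)
  qed
  from GDERIV_add[OF this GDERIV_grad[OF gbar_diff]]
  show ?thesis using F_eq_fhat_mean_add_gbar[OF c] by (simp add: fun_eq_iff)
qed

lemma F_grad: "c > 0 \<Longrightarrow> grad (F c) z = fhat_grad_mean c z + grad gbar z"
  by (rule grad_eqI[OF F_GDERIV])

lemma F_smooth:
  assumes c: "c > 0"
  shows "F c z' \<le> F c z + inner (grad (F c) z) (z' - z) + smoothness c / 2 * (norm (z' - z))\<^sup>2"
proof -
  have "fhat_mean c z' + gbar z' \<le> fhat_mean c z + gbar z + inner (fhat_grad_mean c z + grad gbar z) (z' - z)
          + smoothness c / 2 * (norm (z' - z))\<^sup>2"
    using fhat_mean_linearization_bounds(2)[OF c, of z' z] gbar_smooth[where x = z' and y = z]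
    by (simp add: smoothness_def inner_add_left algebra_simps add_divide_distrib)
  then show ?thesis by (subst F_grad[OF c]) (simp only: F_eq_fhat_mean_add_gbar[OF c])
qed

lemma F_strongly_convex:
  assumes c: "c > 0"
  shows "F c z + inner (grad (F c) z) (z' - z) + \<mu> / 2 * (norm (z' - z))\<^sup>2 \<le> F c z'"
proof -
  have "fhat_mean c z + gbar z + inner (fhat_grad_mean c z + grad gbar z) (z' - z) + \<mu> / 2 * (norm (z' - z))\<^sup>2
          \<le> fhat_mean c z' + gbar z'"
    using fhat_mean_linearization_bounds(1)[OF c, of z' z] gbar_sc[where x = z' and y = z]
    by (simp add: inner_add_left algebra_simps)
  then show ?thesis by (subst F_grad[OF c]) (simp only: F_eq_fhat_mean_add_gbar[OF c])
qed

lemma stoch_grad_unbiased: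
  assumes c: "c > 0"
  shows "integrable P (\<lambda>s. gf c y s + grad (\<lambda>z. g z s) y)"
    and "(\<integral>s. gf c y s + grad (\<lambda>z. g z s) y \<partial>P) = grad (F c) y"
  using fhat_grad_integrable[OF c] g_grad_unbiased[of y] unfolding F_grad[OF c] fhat_grad_mean_def by simp_all

lemma F_smoothing_shift:
  assumes c': "0 < c'" "c' \<le> c"
  shows "F c z \<le> F c' z" and "F c' z \<le> F c z + (c - c') * DU"
proof -
  interpret prob_space P by (rule P)
  have c: "c > 0" using c' by simp
  show "F c z \<le> F c' z"
    unfolding F_eq_fhat_mean_add_gbar[OF c] F_eq_fhat_mean_add_gbar[OF c'(1)] fhat_mean_def
    using fhat_int[OF c] fhat_int[OF c'(1)] fhat_smoothing_shift(1)[OF c'] by (simp add: integral_mono)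
  have "fhat_mean c' z \<le> (\<integral>s. fh c z s + (c - c') * DU \<partial>P)"
    unfolding fhat_mean_def using fhat_int[OF c] fhat_int[OF c'(1)] fhat_smoothing_shift(2)[OF c']
    by (intro integral_mono) auto
  also have "\<dots> = fhat_mean c z + (c - c') * DU" unfolding fhat_mean_def using fhat_int[OF c] by (simp add: prob_space)
  finally show "F c' z \<le> F c z + (c - c') * DU" unfolding F_eq_fhat_mean_add_gbar[OF c] F_eq_fhat_mean_add_gbar[OF c'(1)] by simp
qed

lemma F_measurable: "c > 0 \<Longrightarrow> F c \<in> borel_measurable borel"
  using F_GDERIV unfolding gderiv_def
  by (intro borel_measurable_continuous_onI continuous_at_imp_continuous_on ballI)
    (meson has_derivative_continuous)

lemma F_grad_measurable:
  assumes c: "c > 0"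
  shows "grad (F c) \<in> borel_measurable borel"
proof -
  interpret prob_space P by (rule P)
  have "case_prod (\<lambda>y s. gf c y s + grad (\<lambda>z. g z s) y) \<in> borel_measurable (borel \<Otimes>\<^sub>M P)"
    using stoch_grad_measurable[OF c] by (simp add: case_prod_beta')
  then have "(\<lambda>y. \<integral>s. gf c y s + grad (\<lambda>z. g z s) y \<partial>P) \<in> borel_measurable borel"
    by (rule borel_measurable_lebesgue_integral)
  then show ?thesis using stoch_grad_unbiased(2)[OF c] by simp
qed

lemma mu_le_Lg: "\<mu> \<le> Lg"
proof -
  obtain e :: 'd where e: "e \<in> Basis" using nonempty_Basis by blast
  have "\<mu> / 2 * (norm e)\<^sup>2 \<le> Lg / 2 * (norm e)\<^sup>2"
    using gbar_smooth[where x = "0 + e" and y = 0] gbar_sc[where x = "0 + e" and y = 0] by simp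
  then show ?thesis using e by simp
qed

lemma mu_le_smoothness: "c > 0 \<Longrightarrow> \<mu> \<le> smoothness c"
  using mu_le_Lg opnorm_sq_mean_nonneg zeta_pos by (simp add: smoothness_def add_increasing2)

lemma smoothness_expectation:
  assumes \<xi>: "\<xi> \<in> N \<rightarrow>\<^sub>M P" and law: "distr N P \<xi> = P"
  shows "Lg + (\<integral>\<omega>. (opnorm (A (\<xi> \<omega>)))\<^sup>2 / (c * \<zeta>) \<partial>N) = smoothness c"
proof -
  have "(\<lambda>s. (opnorm (A s))\<^sup>2 / (c * \<zeta>)) \<in> borel_measurable P" using A_sq_int by measurable
  from integral_distr[OF \<xi> this, symmetric]
  have "(\<integral>\<omega>. (opnorm (A (\<xi> \<omega>)))\<^sup>2 / (c * \<zeta>) \<partial>N) = (\<integral>s. (opnorm (A s))\<^sup>2 / (c * \<zeta>) \<partial>P)"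
    unfolding law .
  then show ?thesis by (simp add: smoothness_def opnorm_sq_mean_def)
qed

end

lemma ansgd_y_scaled:
  fixes xt vt :: "'d::real_vector"
  assumes k: "\<mu> * (1 - \<alpha>) + \<theta> \<noteq> 0"
  shows "(\<mu> * (1 - \<alpha>) + \<theta>) *\<^sub>R ansgd_y \<mu> \<alpha> \<theta> xt vt = ((1 - \<alpha>) * (\<mu> + \<theta>)) *\<^sub>R xt + (\<alpha> * \<theta>) *\<^sub>R vt"
  using k unfolding ansgd_y_def by (simp add: scaleR_add_right)

lemma ansgd_coupling:
  fixes xt vt :: "'d::real_vector"
  assumes c: "\<mu> + \<theta> > 0" and k: "\<mu> * (1 - \<alpha>) + \<theta> \<noteq> 0"
  defines "y \<equiv> ansgd_y \<mu> \<alpha> \<theta> xt vt"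
  shows "(1 - \<alpha>) *\<^sub>R (xt - y) = (- (\<alpha> * \<theta> / (\<mu> + \<theta>))) *\<^sub>R (vt - y)"
proof -
  define a where "a = xt - y"
  define b where "b = vt - y"
  have "((1 - \<alpha>) * (\<mu> + \<theta>)) *\<^sub>R a + (\<alpha> * \<theta>) *\<^sub>R b
        = ((1 - \<alpha>) * (\<mu> + \<theta>)) *\<^sub>R xt + (\<alpha> * \<theta>) *\<^sub>R vt - (\<mu> * (1 - \<alpha>) + \<theta>) *\<^sub>R y"
    by (simp add: a_def b_def algebra_simps)
  also have "\<dots> = 0" unfolding y_def ansgd_y_scaled[OF k] by simp
  finally have "((1 - \<alpha>) * (\<mu> + \<theta>)) *\<^sub>R a = - ((\<alpha> * \<theta>) *\<^sub>R b)"
    by (simp add: eq_neg_iff_add_eq_0)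
  moreover have "(\<mu> + \<theta>) *\<^sub>R ((- (\<alpha> * \<theta> / (\<mu> + \<theta>))) *\<^sub>R b) = - ((\<alpha> * \<theta>) *\<^sub>R b)"
    using c by simp
  ultimately have "(\<mu> + \<theta>) *\<^sub>R ((1 - \<alpha>) *\<^sub>R a) = (\<mu> + \<theta>) *\<^sub>R ((- (\<alpha> * \<theta> / (\<mu> + \<theta>))) *\<^sub>R b)"
    by (metis mult.commute scaleR_scaleR)
  then show ?thesis unfolding a_def b_def using c by (metis less_irrefl scaleR_cancel_left)
qed

lemma ansgd_x_step_convex_comb:
  fixes xt vt G :: "'d::real_vector"
  assumes c: "\<mu> + \<theta> > 0" and k: "\<mu> * (1 - \<alpha>) + \<theta> \<noteq> 0"
  defines "y \<equiv> ansgd_y \<mu> \<alpha> \<theta> xt vt"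
  shows "y - (\<alpha> / (\<mu> + \<theta>)) *\<^sub>R G = (1 - \<alpha>) *\<^sub>R xt + \<alpha> *\<^sub>R ((1 / (\<mu> + \<theta>)) *\<^sub>R (\<theta> *\<^sub>R vt + \<mu> *\<^sub>R y - G))"
proof -
  define cc where "cc = \<mu> + \<theta>"
  define kk where "kk = \<mu> * (1 - \<alpha>) + \<theta>"
  have ky: "kk *\<^sub>R y = ((1 - \<alpha>) * cc) *\<^sub>R xt + (\<alpha> * \<theta>) *\<^sub>R vt"
    unfolding y_def kk_def cc_def by (rule ansgd_y_scaled[OF k])
  have "cc *\<^sub>R ((1 - \<alpha>) *\<^sub>R xt + \<alpha> *\<^sub>R ((1 / cc) *\<^sub>R (\<theta> *\<^sub>R vt + \<mu> *\<^sub>R y - G)))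
        = ((1 - \<alpha>) * cc) *\<^sub>R xt + (\<alpha> * \<theta>) *\<^sub>R vt + (\<alpha> * \<mu>) *\<^sub>R y - \<alpha> *\<^sub>R G"
    using c unfolding cc_def[symmetric] by (simp add: algebra_simps)
  also have "\<dots> = kk *\<^sub>R y + (\<alpha> * \<mu>) *\<^sub>R y - \<alpha> *\<^sub>R G" using ky by simp
  also have "\<dots> = cc *\<^sub>R y - \<alpha> *\<^sub>R G" by (simp add: kk_def cc_def algebra_simps)
  also have "\<dots> = cc *\<^sub>R (y - (\<alpha> / cc) *\<^sub>R G)"
    using c by (simp add: cc_def scaleR_diff_right)
  finally have "(1 - \<alpha>) *\<^sub>R xt + \<alpha> *\<^sub>R ((1 / cc) *\<^sub>R (\<theta> *\<^sub>R vt + \<mu> *\<^sub>R y - G)) = y - (\<alpha> / cc) *\<^sub>R G"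
    by (rule scaleR_left_imp_eq[rotated]) (use c in \<open>simp add: cc_def\<close>)
  then show ?thesis unfolding cc_def by simp
qed

lemma ansgd_gap_decomp:
  fixes xt vt x :: "'d::real_vector"
  assumes k: "\<mu> * (1 - \<alpha>) + \<theta> \<noteq> 0"
  shows "(1 - \<alpha>) *\<^sub>R xt + \<alpha> *\<^sub>R x - ansgd_y \<mu> \<alpha> \<theta> xt vt
     = (1 - \<alpha> - (1 - \<alpha>) * (\<mu> + \<theta>) / (\<mu> * (1 - \<alpha>) + \<theta>)) *\<^sub>R (xt - x)
       + (- (\<alpha> * \<theta> / (\<mu> * (1 - \<alpha>) + \<theta>))) *\<^sub>R (vt - x)"
proof -
  define k where "k = \<mu> * (1 - \<alpha>) + \<theta>"
  have y: "ansgd_y \<mu> \<alpha> \<theta> xt vt = ((1 - \<alpha>) * (\<mu> + \<theta>) / k) *\<^sub>R xt + (\<alpha> * \<theta> / k) *\<^sub>R vt"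
    unfolding ansgd_y_def k_def by simp
  have "(1 - \<alpha>) * (\<mu> + \<theta>) / k + \<alpha> * \<theta> / k = 1"
    using k by (simp add: k_def add_divide_distrib[symmetric] algebra_simps)
  then have "(1 - ((1 - \<alpha>) * (\<mu> + \<theta>) / k + \<alpha> * \<theta> / k)) *\<^sub>R x = 0" by simp
  then show ?thesis unfolding y k_def[symmetric] by (simp add: algebra_simps)
qed

lemma ansgd_gap_norm_sq_le:
  fixes x :: "'d::real_inner"
  assumes k: "\<mu> * (1 - \<alpha>) + \<theta> \<noteq> 0"
  obtains C where "\<And>xt vt. (norm ((1 - \<alpha>) *\<^sub>R xt + \<alpha> *\<^sub>R x - ansgd_y \<mu> \<alpha> \<theta> xt vt))\<^sup>2
                            \<le> C * ((norm (x - xt))\<^sup>2 + (norm (x - vt))\<^sup>2)"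
proof
  define p where "p = 1 - \<alpha> - (1 - \<alpha>) * (\<mu> + \<theta>) / (\<mu> * (1 - \<alpha>) + \<theta>)"
  define q where "q = - (\<alpha> * \<theta> / (\<mu> * (1 - \<alpha>) + \<theta>))"
  fix xt vt :: 'd
  have "(norm ((1 - \<alpha>) *\<^sub>R xt + \<alpha> *\<^sub>R x - ansgd_y \<mu> \<alpha> \<theta> xt vt))\<^sup>2
        \<le> 2 * p\<^sup>2 * (norm (x - xt))\<^sup>2 + 2 * q\<^sup>2 * (norm (x - vt))\<^sup>2"
    unfolding ansgd_gap_decomp[OF k] p_def[symmetric] q_def[symmetric]
    using norm_lincomb_sq_le[of p "xt - x" q "vt - x"] by (simp add: norm_minus_commute)
  also have "\<dots> \<le> 2 * (p\<^sup>2 + q\<^sup>2) * ((norm (x - xt))\<^sup>2 + (norm (x - vt))\<^sup>2)"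
    by (simp add: algebra_simps)
  finally show "(norm ((1 - \<alpha>) *\<^sub>R xt + \<alpha> *\<^sub>R x - ansgd_y \<mu> \<alpha> \<theta> xt vt))\<^sup>2
      \<le> 2 * (p\<^sup>2 + q\<^sup>2) * ((norm (x - xt))\<^sup>2 + (norm (x - vt))\<^sup>2)" .
qed

lemma ansgd_three_point_identity:
  fixes a b e G :: "'d::real_inner"
  assumes c: "\<mu> + \<theta> > 0" and coupling: "(1 - \<alpha>) *\<^sub>R a = (- (\<alpha> * \<theta> / (\<mu> + \<theta>))) *\<^sub>R b"
  shows "(1 - \<alpha>) * inner G a + \<alpha> * inner G e + \<alpha> * \<mu> / 2 * (norm e)\<^sup>2 + \<alpha> * \<theta> / 2 * (norm (e - b))\<^sup>2
           - \<alpha> * (\<mu> + \<theta>) / 2 * (norm (e - (\<theta> / (\<mu> + \<theta>)) *\<^sub>R b + (1 / (\<mu> + \<theta>)) *\<^sub>R G))\<^sup>2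
         = \<alpha> * \<mu> * \<theta> / (2 * (\<mu> + \<theta>)) * (norm b)\<^sup>2 - \<alpha> / (2 * (\<mu> + \<theta>)) * (norm G)\<^sup>2"
proof -
  define c where "c = \<mu> + \<theta>"
  have c0: "c > 0" and m: "\<mu> = c - \<theta>" using c by (simp_all add: c_def)
  have "(1 - \<alpha>) * inner G a = inner G ((1 - \<alpha>) *\<^sub>R a)" by simp
  then have ia: "(1 - \<alpha>) * inner G a = - (\<alpha> * \<theta> / c) * inner G b" using coupling by (simp add: c_def)
  have n1: "(norm (e - (\<theta> / c) *\<^sub>R b + (1 / c) *\<^sub>R G))\<^sup>2
      = (norm e)\<^sup>2 - 2 * (\<theta> / c) * inner e b + (\<theta> / c)\<^sup>2 * (norm b)\<^sup>2
        + 2 * (1 / c) * inner e G - 2 * (\<theta> / c) * (1 / c) * inner b G + (1 / c)\<^sup>2 * (norm G)\<^sup>2"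
    by (simp add: norm_sq_expand inner_diff_left inner_add_left inner_add_right inner_diff_right
        power_divide power_mult_distrib inner_commute[of b G] algebra_simps)
  have n2: "(norm (e - b))\<^sup>2 = (norm e)\<^sup>2 - 2 * inner e b + (norm b)\<^sup>2" by (rule norm_sq_expand(2))
  have "- (\<alpha> * \<theta> / c) * gb + \<alpha> * ge + \<alpha> * \<mu> / 2 * ee + \<alpha> * \<theta> / 2 * (ee - 2 * eb + bb)
     - \<alpha> * c / 2 * (ee - 2 * (\<theta> / c) * eb + (\<theta> / c)\<^sup>2 * bb + 2 * (1 / c) * ge - 2 * (\<theta> / c) * (1 / c) * gb + (1 / c)\<^sup>2 * gg)
   = \<alpha> * \<mu> * \<theta> / (2 * c) * bb - \<alpha> / (2 * c) * gg" for ee eb bb ge gb gg :: real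
    unfolding m using c0 by (simp add: field_simps power2_eq_square)
  then show ?thesis
    unfolding c_def[symmetric] ia n1 n2 inner_commute[of e G] inner_commute[of b G] .
qed

lemma smooth_gradient_step_bound:
  fixes F :: "'d::real_inner \<Rightarrow> real"
  assumes S: "\<And>a b. F a \<le> F b + inner (gF b) (a - b) + L / 2 * (norm (a - b))\<^sup>2"
    and c: "c > 0" and d: "c - \<alpha> * L > 0" and al: "0 \<le> \<alpha>"
  shows "F (y - (\<alpha> / c) *\<^sub>R G) \<le> F y - \<alpha> / (2 * c) * (norm G)\<^sup>2 + \<alpha> / (2 * (c - \<alpha> * L)) * (norm (G - gF y))\<^sup>2"
proof -
  define d where "d = c - \<alpha> * L"
  define sG where "sG = inner (G - gF y) G"
  have T: "F (y - (\<alpha> / c) *\<^sub>R G) \<le> F y - (\<alpha> / c) * inner (gF y) G + L * \<alpha>\<^sup>2 / (2 * c\<^sup>2) * (norm G)\<^sup>2"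
    using S[of "y - (\<alpha> / c) *\<^sub>R G" y] by (simp add: power2_eq_square field_simps)
  have "(\<alpha> / c) * inner (gF y) G = 2 * (\<alpha> / (2 * c) * (norm G)\<^sup>2) - (\<alpha> / c) * sG"
    using c by (simp add: sG_def inner_diff_left power2_norm_eq_inner field_simps)
  moreover have "(\<alpha> / c) * sG \<le> (\<alpha> / c) * (d / c / 2 * (norm G)\<^sup>2 + (norm (G - gF y))\<^sup>2 / (2 * (d / c)))"
    \<comment> \<open>Young's inequality with weight \<open>d / c\<close> absorbs the noise into the \<open>\<alpha> L\<close> part of the step\<close>
    unfolding sG_def using inner_le_young[of "d / c" "G - gF y" G] d c al
    by (intro mult_left_mono) (auto simp: d_def)
  moreover have "(\<alpha> / c) * (d / c / 2 * (norm G)\<^sup>2 + (norm (G - gF y))\<^sup>2 / (2 * (d / c)))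
      = \<alpha> / (2 * c) * (norm G)\<^sup>2 - L * \<alpha>\<^sup>2 / (2 * c\<^sup>2) * (norm G)\<^sup>2 + \<alpha> / (2 * d) * (norm (G - gF y))\<^sup>2"
    using c d by (simp add: d_def field_simps power2_eq_square)
  ultimately show ?thesis using T by (simp add: d_def)
qed

lemma ansgd_step_bound:
  fixes F :: "'d::real_inner \<Rightarrow> real" and gF :: "'d \<Rightarrow> 'd" and xt vt x G :: 'd
  assumes S: "\<And>a b. F a \<le> F b + inner (gF b) (a - b) + L / 2 * (norm (a - b))\<^sup>2"
    and C: "\<And>a b. F b + inner (gF b) (a - b) + \<mu> / 2 * (norm (a - b))\<^sup>2 \<le> F a"
    and mu: "\<mu> \<ge> 0" and th: "\<theta> \<ge> 0" and al: "0 \<le> \<alpha>" "\<alpha> \<le> 1"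
    and cL: "\<mu> + \<theta> - \<alpha> * L > 0" and Lmu: "\<mu> \<le> L"
  defines "y \<equiv> ansgd_y \<mu> \<alpha> \<theta> xt vt"
  shows "F (y - (\<alpha> / (\<mu> + \<theta>)) *\<^sub>R G)
     \<le> (1 - \<alpha>) * F xt + \<alpha> * F x + \<alpha> * \<theta> / 2 * (norm (x - vt))\<^sup>2
       - \<alpha> * (\<mu> + \<theta>) / 2 * (norm (x - (1 / (\<mu> + \<theta>)) *\<^sub>R (\<theta> *\<^sub>R vt + \<mu> *\<^sub>R y - G)))\<^sup>2
       + \<alpha> / (2 * (\<mu> + \<theta> - \<alpha> * L)) * (norm (G - gF y))\<^sup>2
       + inner (G - gF y) ((1 - \<alpha>) *\<^sub>R xt + \<alpha> *\<^sub>R x - y)"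
proof -
  define c where "c = \<mu> + \<theta>"
  have c0: "c > 0" using cL al mu Lmu unfolding c_def by (smt (verit) mult_nonneg_nonneg)
  have "\<alpha> * \<mu> \<le> \<alpha> * L" by (rule mult_left_mono[OF Lmu al(1)])
  then have k0: "\<mu> * (1 - \<alpha>) + \<theta> \<noteq> 0" using cL by (simp add: algebra_simps)
  define a where "a = xt - y"
  define b where "b = vt - y"
  define e where "e = x - y"
  define s where "s = G - gF y"
  have coupling: "(1 - \<alpha>) *\<^sub>R a = (- (\<alpha> * \<theta> / c)) *\<^sub>R b"
    unfolding a_def b_def y_def c_def using c0 k0 by (intro ansgd_coupling) (simp_all add: c_def)
  have xv: "x - (1 / c) *\<^sub>R (\<theta> *\<^sub>R vt + \<mu> *\<^sub>R y - G) = e - (\<theta> / c) *\<^sub>R b + (1 / c) *\<^sub>R G"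
  proof -
    have "(1 / c) *\<^sub>R (\<theta> *\<^sub>R vt + \<mu> *\<^sub>R y - G) = (1 / c) *\<^sub>R (\<theta> *\<^sub>R b + c *\<^sub>R y - G)"
      by (simp add: b_def c_def algebra_simps)
    also have "\<dots> = (\<theta> / c) *\<^sub>R b + y - (1 / c) *\<^sub>R G" using c0 by (simp add: algebra_simps)
    finally show ?thesis by (simp add: e_def algebra_simps)
  qed
  have descent: "F (y - (\<alpha> / c) *\<^sub>R G) \<le> F y - \<alpha> / (2 * c) * (norm G)\<^sup>2 + \<alpha> / (2 * (c - \<alpha> * L)) * (norm s)\<^sup>2"
    unfolding s_def using smooth_gradient_step_bound[OF S c0 _ al(1)] cL by (simp add: c_def)
  have lower_xt: "(1 - \<alpha>) * (F y + inner (gF y) a) \<le> (1 - \<alpha>) * F xt"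
    using C[where a = xt and b = y] mu al unfolding a_def
    by (intro mult_left_mono) (auto intro: order_trans[rotated])
  have lower_x: "\<alpha> * (F y + inner (gF y) e + \<mu> / 2 * (norm e)\<^sup>2) \<le> \<alpha> * F x"
    using C[where a = x and b = y] al unfolding e_def by (intro mult_left_mono) auto
  have "(1 - \<alpha>) * (F y + inner (gF y) a) + \<alpha> * (F y + inner (gF y) e + \<mu> / 2 * (norm e)\<^sup>2)
       + \<alpha> * \<theta> / 2 * (norm (e - b))\<^sup>2 - \<alpha> * c / 2 * (norm (e - (\<theta> / c) *\<^sub>R b + (1 / c) *\<^sub>R G))\<^sup>2
       + inner s ((1 - \<alpha>) *\<^sub>R a + \<alpha> *\<^sub>R e)
       = F y + \<alpha> * \<mu> * \<theta> / (2 * c) * (norm b)\<^sup>2 - \<alpha> / (2 * c) * (norm G)\<^sup>2"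
    using ansgd_three_point_identity[OF _ coupling[unfolded c_def], where e = e and G = G] c0
    unfolding c_def[symmetric] s_def by (simp add: inner_diff_left inner_add_right algebra_simps)
  moreover have "0 \<le> \<alpha> * \<mu> * \<theta> / (2 * c) * (norm b)\<^sup>2" using al mu th c0 by simp
  moreover have gap: "(1 - \<alpha>) *\<^sub>R xt + \<alpha> *\<^sub>R x - y = (1 - \<alpha>) *\<^sub>R a + \<alpha> *\<^sub>R e"
    by (simp add: a_def e_def algebra_simps)
  moreover have "x - vt = e - b" by (simp add: e_def b_def)
  ultimately show ?thesis
    using descent lower_xt lower_x unfolding c_def[symmetric] xv s_def[symmetric] gap by auto
qed

lemma fst_borel_measurable[measurable]:
  "(fst :: ('a::second_countable_topology \<times> 'b::second_countable_topology) \<Rightarrow> 'a) \<in> borel_measurable borel"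
  by (rule borel_measurable_continuous_onI) (intro continuous_intros)

lemma snd_borel_measurable[measurable]:
  "(snd :: ('a::second_countable_topology \<times> 'b::second_countable_topology) \<Rightarrow> 'b) \<in> borel_measurable borel"
  by (rule borel_measurable_continuous_onI) (intro continuous_intros)

lemma (in prob_space) integral_indep_var_zero:
  assumes Z1: "Z1 \<in> M \<rightarrow>\<^sub>M S1" and Z2: "Z2 \<in> M \<rightarrow>\<^sub>M S2" and ind: "indep_var S1 Z1 S2 Z2"
    and \<Phi>: "\<Phi> \<in> borel_measurable (S1 \<Otimes>\<^sub>M S2)" and int: "integrable M (\<lambda>\<omega>. \<Phi> (Z1 \<omega>, Z2 \<omega>))"
    and zero: "\<And>a. a \<in> space S1 \<Longrightarrow> (\<integral>\<omega>. \<Phi> (a, Z2 \<omega>) \<partial>M) = 0"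
  shows "(\<integral>\<omega>. \<Phi> (Z1 \<omega>, Z2 \<omega>) \<partial>M) = (0::real)"
proof -
  have Z12: "(\<lambda>\<omega>. (Z1 \<omega>, Z2 \<omega>)) \<in> M \<rightarrow>\<^sub>M S1 \<Otimes>\<^sub>M S2" using Z1 Z2 by (rule measurable_Pair)
  have prod: "distr M S1 Z1 \<Otimes>\<^sub>M distr M S2 Z2 = distr M (S1 \<Otimes>\<^sub>M S2) (\<lambda>\<omega>. (Z1 \<omega>, Z2 \<omega>))"
    using ind unfolding indep_var_distribution_eq by simp
  interpret D1: prob_space "distr M S1 Z1" by (rule prob_space_distr[OF Z1])
  interpret D2: prob_space "distr M S2 Z2" by (rule prob_space_distr[OF Z2])
  interpret D12: pair_sigma_finite "distr M S1 Z1" "distr M S2 Z2"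
    unfolding pair_sigma_finite_def using prob_space_imp_sigma_finite D1.prob_space_axioms D2.prob_space_axioms
    by blast
  have int12: "integrable (distr M S1 Z1 \<Otimes>\<^sub>M distr M S2 Z2) \<Phi>"
    unfolding prod using int by (subst integrable_distr_eq[OF Z12 \<Phi>]) simp
  have "(\<integral>b. \<Phi> (a, b) \<partial>distr M S2 Z2) = 0" if "a \<in> space S1" for a
    using zero[OF that] by (subst integral_distr[OF Z2 measurable_Pair2[OF \<Phi> that]])
  then have "(\<integral>a. (\<integral>b. \<Phi> (a, b) \<partial>distr M S2 Z2) \<partial>distr M S1 Z1) = (\<integral>a. 0 \<partial>distr M S1 Z1)"
    by (intro Bochner_Integration.integral_cong) auto
  moreover have "(\<integral>\<omega>. \<Phi> (Z1 \<omega>, Z2 \<omega>) \<partial>M) = integral\<^sup>L (distr M S1 Z1 \<Otimes>\<^sub>M distr M S2 Z2) \<Phi>"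
    unfolding prod by (subst integral_distr[OF Z12 \<Phi>]) simp
  ultimately show ?thesis using D12.integral_fst'[OF int12] by simp
qed

locale ansgd_process = smoothed_loss P A U Q om \<zeta> R B DU g Lg \<mu>
  for P :: "'b measure" and A :: "'b \<Rightarrow> 'd::euclidean_space \<Rightarrow> 'm::euclidean_space"
    and U Q om \<zeta> R B DU g Lg \<mu> +
  fixes M :: "'w measure" and \<xi> :: "nat \<Rightarrow> 'w \<Rightarrow> 'b"
    and \<gamma> \<theta> \<alpha> \<eta> :: "nat \<Rightarrow> real" and x0 v0 :: 'd
  assumes M: "prob_space M"
    and xi_meas: "\<And>i. i \<ge> 1 \<Longrightarrow> \<xi> i \<in> M \<rightarrow>\<^sub>M P"
    and xi_distr: "\<And>i. i \<ge> 1 \<Longrightarrow> distr M P (\<xi> i) = P"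
    and xi_indep: "prob_space.indep_vars M (\<lambda>_. P) \<xi> {1..}"
    and gamma_pos: "\<And>k. \<gamma> k > 0" and gamma_mono: "\<And>k. \<gamma> (Suc k) \<le> \<gamma> k"
    and mu_nonneg: "\<mu> \<ge> 0" and theta_nonneg: "\<And>k. \<theta> k \<ge> 0"
    and alpha_range: "\<And>k. 0 \<le> \<alpha> k \<and> \<alpha> k \<le> 1"
    and eta_def: "\<And>k. \<eta> k = \<alpha> k / (\<mu> + \<theta> k)"
    and step_cond: "\<And>k. \<mu> + \<theta> k - \<alpha> k * smoothness (\<gamma> (Suc k)) > 0"
begin

definition "stoch_grad k y s = gf (\<gamma> (Suc k)) y s + grad (\<lambda>z. g z s) y"

definition "iterate ss = ansgd \<mu> \<alpha> \<theta> \<eta> (\<lambda>k y. stoch_grad k y (ss (Suc k))) x0 v0"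

definition "extrapolate k (p :: 'd \<times> 'd) = ansgd_y \<mu> (\<alpha> k) (\<theta> k) (fst p) (snd p)"

definition "noise_inner x k p s =
  inner (stoch_grad k (extrapolate k p) s - grad (F (\<gamma> (Suc k))) (extrapolate k p))
        ((1 - \<alpha> k) *\<^sub>R fst p + \<alpha> k *\<^sub>R x - extrapolate k p)"

lemma sgrad_eq: "sgrad A U Q om g \<gamma> \<xi> \<omega> = (\<lambda>k y. stoch_grad k y (\<xi> (Suc k) \<omega>))"
  by (auto simp: sgrad_def stoch_grad_def fun_eq_iff)

lemma iterate_cong: "(\<And>i. 1 \<le> i \<Longrightarrow> i \<le> k \<Longrightarrow> ss i = ss' i) \<Longrightarrow> iterate ss k = iterate ss' k"
  by (induction k) (simp_all add: iterate_def Let_def)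

lemma stoch_grad_measurable_comp:
  assumes f: "f \<in> borel_measurable N" and h: "h \<in> N \<rightarrow>\<^sub>M P"
  shows "(\<lambda>w. stoch_grad k (f w) (h w)) \<in> borel_measurable N"
proof -
  have "(\<lambda>w. (f w, h w)) \<in> N \<rightarrow>\<^sub>M borel \<Otimes>\<^sub>M P" using f h by (rule measurable_Pair)
  from measurable_compose[OF this stoch_grad_measurable[OF gamma_pos]]
  show ?thesis by (simp add: stoch_grad_def)
qed

lemma extrapolate_measurable[measurable]: "extrapolate k \<in> borel_measurable borel"
  unfolding extrapolate_def[abs_def] ansgd_y_def
  by (intro borel_measurable_add borel_measurable_scaleR borel_measurable_const
      fst_borel_measurable snd_borel_measurable)

lemma iterate_measurable:
  "k \<le> n \<Longrightarrow> (\<lambda>ss. iterate ss k) \<in> borel_measurable (Pi\<^sub>M {1..n} (\<lambda>_. P))"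
proof (induction k)
  case 0 then show ?case by (simp add: iterate_def)
next
  case (Suc k)
  let ?S = "Pi\<^sub>M {1..n} (\<lambda>_. P)"
  have it[measurable]: "(\<lambda>ss. iterate ss k) \<in> borel_measurable ?S" using Suc by simp
  define y where "y ss = extrapolate k (iterate ss k)" for ss
  have [measurable]: "y \<in> borel_measurable ?S" unfolding y_def[abs_def] by measurable
  have sample: "(\<lambda>ss. ss (Suc k)) \<in> ?S \<rightarrow>\<^sub>M P"
    using Suc.prems by (intro measurable_component_singleton) auto
  have [measurable]: "(\<lambda>ss. stoch_grad k (y ss) (ss (Suc k))) \<in> borel_measurable ?S"
    by (rule stoch_grad_measurable_comp[OF _ sample]) measurable
  have step: "(\<lambda>ss. iterate ss (Suc k)) = (\<lambda>ss. (y ss - \<eta> k *\<^sub>R stoch_grad k (y ss) (ss (Suc k)),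
      (1 / (\<mu> + \<theta> k)) *\<^sub>R (\<theta> k *\<^sub>R snd (iterate ss k) + \<mu> *\<^sub>R y ss - stoch_grad k (y ss) (ss (Suc k)))))"
    by (simp add: iterate_def y_def extrapolate_def Let_def fun_eq_iff)
  show ?case unfolding step by measurable
qed

lemma run_measurable: "(\<lambda>\<omega>. iterate (\<lambda>i. \<xi> i \<omega>) k) \<in> borel_measurable M"
proof -
  have "(\<lambda>\<omega>. \<lambda>i\<in>{1..k}. \<xi> i \<omega>) \<in> M \<rightarrow>\<^sub>M Pi\<^sub>M {1..k} (\<lambda>_. P)"
    using xi_meas by (intro measurable_restrict) auto
  from measurable_compose[OF this iterate_measurable[of k k]]
  have "(\<lambda>\<omega>. iterate (\<lambda>i\<in>{1..k}. \<xi> i \<omega>) k) \<in> borel_measurable M" by simp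
  moreover have "iterate (\<lambda>i\<in>{1..k}. \<xi> i \<omega>) k = iterate (\<lambda>i. \<xi> i \<omega>) k" for \<omega>
    by (rule iterate_cong) auto
  ultimately show ?thesis by simp
qed

lemma noise_inner_measurable: "(\<lambda>q. noise_inner x k (fst q) (snd q)) \<in> borel_measurable (borel \<Otimes>\<^sub>M P)"
proof -
  have [measurable]: "(\<lambda>q. extrapolate k (fst q)) \<in> borel_measurable (borel \<Otimes>\<^sub>M P)" by measurable
  have [measurable]: "(\<lambda>q. stoch_grad k (extrapolate k (fst q)) (snd q)) \<in> borel_measurable (borel \<Otimes>\<^sub>M P)"
    by (intro stoch_grad_measurable_comp) measurable
  have [measurable]: "(\<lambda>q. grad (F (\<gamma> (Suc k))) (extrapolate k (fst q))) \<in> borel_measurable (borel \<Otimes>\<^sub>M P)"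
    using measurable_compose[OF _ F_grad_measurable[OF gamma_pos]] by measurable
  show ?thesis unfolding noise_inner_def by measurable
qed

lemma noise_inner_mean_zero: "(\<integral>s. noise_inner x k p s \<partial>P) = 0"
proof -
  interpret prob_space P by (rule P)
  let ?y = "extrapolate k p"
  have "(\<integral>s. noise_inner x k p s \<partial>P)
      = inner (\<integral>s. stoch_grad k ?y s \<partial>P) ((1 - \<alpha> k) *\<^sub>R fst p + \<alpha> k *\<^sub>R x - ?y)
        - inner (grad (F (\<gamma> (Suc k))) ?y) ((1 - \<alpha> k) *\<^sub>R fst p + \<alpha> k *\<^sub>R x - ?y)"
    using stoch_grad_unbiased(1)[OF gamma_pos]
    by (simp add: noise_inner_def inner_diff_left integral_inner_left stoch_grad_def prob_space)
  also have "\<dots> = 0" using stoch_grad_unbiased(2)[OF gamma_pos] by (simp add: stoch_grad_def)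
  finally show ?thesis .
qed

text \<open>The step-\<open>k\<close> iterate depends only on \<open>\<xi>\<^sub>1,\<dots>,\<xi>\<^sub>k\<close>, which are independent of \<open>\<xi>\<^sub>k\<^sub>+\<^sub>1\<close>.\<close>
lemma noise_inner_expectation_zero:
  assumes int: "integrable M (\<lambda>\<omega>. noise_inner x k (iterate (\<lambda>i. \<xi> i \<omega>) k) (\<xi> (Suc k) \<omega>))"
  shows "(\<integral>\<omega>. noise_inner x k (iterate (\<lambda>i. \<xi> i \<omega>) k) (\<xi> (Suc k) \<omega>) \<partial>M) = 0"
proof -
  interpret prob_space M by (rule M)
  let ?S1 = "Pi\<^sub>M {1..k} (\<lambda>_. P)" and ?S2 = "Pi\<^sub>M {Suc k} (\<lambda>_. P)"
  define Z1 where "Z1 \<omega> = restrict (\<lambda>i. \<xi> i \<omega>) {1..k}" for \<omega>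
  define Z2 where "Z2 \<omega> = restrict (\<lambda>i. \<xi> i \<omega>) {Suc k}" for \<omega>
  define \<Phi> where "\<Phi> q = noise_inner x k (iterate (fst q) k) (snd q (Suc k))" for q
  have Z1: "Z1 \<in> M \<rightarrow>\<^sub>M ?S1" and Z2: "Z2 \<in> M \<rightarrow>\<^sub>M ?S2"
    unfolding Z1_def Z2_def using xi_meas by (auto intro!: measurable_restrict)
  define K where "K = case_bool {1..k} {Suc k}"
  have "indep_vars (\<lambda>j. Pi\<^sub>M (K j) (\<lambda>_. P)) (\<lambda>j \<omega>. restrict (\<lambda>i. \<xi> i \<omega>) (K j)) UNIV"
    by (rule indep_vars_restrict[OF xi_indep]) (auto simp: K_def disjoint_family_on_def split: bool.split)
  moreover have "(\<lambda>j. Pi\<^sub>M (K j) (\<lambda>_. P)) = case_bool ?S1 ?S2"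
    and "(\<lambda>j \<omega>. restrict (\<lambda>i. \<xi> i \<omega>) (K j)) = case_bool Z1 Z2"
    by (auto simp: K_def Z1_def Z2_def fun_eq_iff split: bool.split)
  ultimately have ind: "indep_var ?S1 Z1 ?S2 Z2" unfolding indep_var_def by simp
  have comp: "(\<lambda>f. f (Suc k)) \<in> ?S2 \<rightarrow>\<^sub>M P" by (rule measurable_component_singleton) simp
  have "(\<lambda>q. (iterate (fst q) k, snd q (Suc k))) \<in> ?S1 \<Otimes>\<^sub>M ?S2 \<rightarrow>\<^sub>M borel \<Otimes>\<^sub>M P"
    using measurable_compose[OF measurable_fst iterate_measurable[of k k]]
      measurable_compose[OF measurable_snd comp]
    by (intro measurable_Pair) (auto simp: comp_def)
  from measurable_compose[OF this noise_inner_measurable]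
  have \<Phi>: "\<Phi> \<in> borel_measurable (?S1 \<Otimes>\<^sub>M ?S2)" unfolding \<Phi>_def by simp
  have on_path: "\<Phi> (Z1 \<omega>, Z2 \<omega>) = noise_inner x k (iterate (\<lambda>i. \<xi> i \<omega>) k) (\<xi> (Suc k) \<omega>)" for \<omega>
  proof -
    have "iterate (Z1 \<omega>) k = iterate (\<lambda>i. \<xi> i \<omega>) k" unfolding Z1_def by (rule iterate_cong) auto
    then show ?thesis by (simp add: \<Phi>_def Z2_def)
  qed
  have "(\<integral>\<omega>. \<Phi> (a, Z2 \<omega>) \<partial>M) = 0" for a
  proof -
    have "(\<lambda>s. (iterate a k, s)) \<in> P \<rightarrow>\<^sub>M borel \<Otimes>\<^sub>M P" by simp
    from measurable_compose[OF this noise_inner_measurable]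
    have "noise_inner x k (iterate a k) \<in> borel_measurable P" by simp
    then have "(\<integral>\<omega>. \<Phi> (a, Z2 \<omega>) \<partial>M) = (\<integral>s. noise_inner x k (iterate a k) s \<partial>distr M P (\<xi> (Suc k)))"
      by (subst integral_distr[OF xi_meas]) (simp_all add: \<Phi>_def Z2_def)
    then show ?thesis using xi_distr[of "Suc k"] noise_inner_mean_zero by simp
  qed
  then show ?thesis using integral_indep_var_zero[OF Z1 Z2 ind \<Phi>] int by (simp add: on_path)
qed

abbreviation "run \<omega> \<equiv> iterate (\<lambda>i. \<xi> i \<omega>)"

definition "noise \<omega> k = stoch_grad k (extrapolate k (run \<omega> k)) (\<xi> (Suc k) \<omega>)
                       - grad (F (\<gamma> (Suc k))) (extrapolate k (run \<omega> k))"

lemma ansgd_sgrad_eq_run: "ansgd \<mu> \<alpha> \<theta> \<eta> (sgrad A U Q om g \<gamma> \<xi> \<omega>) x0 v0 = run \<omega>"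
  by (simp add: iterate_def sgrad_eq)

lemma noise_eq_sgrad:
  "(let y = ansgd_y \<mu> (\<alpha> k) (\<theta> k) (fst (run \<omega> k)) (snd (run \<omega> k))
    in sgrad A U Q om g \<gamma> \<xi> \<omega> k y - grad (F (\<gamma> (Suc k))) y) = noise \<omega> k"
  by (simp add: noise_def extrapolate_def sgrad_eq Let_def)

lemma run_fst_measurable[measurable]: "(\<lambda>\<omega>. fst (run \<omega> k)) \<in> borel_measurable M"
  and run_snd_measurable[measurable]: "(\<lambda>\<omega>. snd (run \<omega> k)) \<in> borel_measurable M"
  using measurable_compose[OF run_measurable fst_borel_measurable]
    measurable_compose[OF run_measurable snd_borel_measurable] by simp_all

lemma noise_measurable[measurable]: "(\<lambda>\<omega>. noise \<omega> k) \<in> borel_measurable M"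
proof -
  have y[measurable]: "(\<lambda>\<omega>. extrapolate k (run \<omega> k)) \<in> borel_measurable M"
    using measurable_compose[OF run_measurable extrapolate_measurable] by simp
  have [measurable]: "(\<lambda>\<omega>. stoch_grad k (extrapolate k (run \<omega> k)) (\<xi> (Suc k) \<omega>)) \<in> borel_measurable M"
    by (rule stoch_grad_measurable_comp[OF y xi_meas]) simp
  have [measurable]: "(\<lambda>\<omega>. grad (F (\<gamma> (Suc k))) (extrapolate k (run \<omega> k))) \<in> borel_measurable M"
    using measurable_compose[OF y F_grad_measurable[OF gamma_pos]] by simp
  show ?thesis unfolding noise_def[abs_def] by measurable
qed

lemma step_denominators_pos: "0 < \<mu> + \<theta> k" "0 < \<mu> * (1 - \<alpha> k) + \<theta> k"
proof -
  have "\<alpha> k * \<mu> \<le> \<alpha> k * smoothness (\<gamma> (Suc k))"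
    using alpha_range[of k] mu_le_smoothness[OF gamma_pos] by (intro mult_left_mono) auto
  moreover have "0 \<le> \<alpha> k * \<mu>" using alpha_range[of k] mu_nonneg by simp
  ultimately show "0 < \<mu> + \<theta> k" "0 < \<mu> * (1 - \<alpha> k) + \<theta> k" using step_cond[of k]
    by (auto simp: algebra_simps)
qed

lemma iterate_Suc:
  "iterate ss (Suc k) =
     (let y = extrapolate k (iterate ss k); G = stoch_grad k y (ss (Suc k))
      in (y - (\<alpha> k / (\<mu> + \<theta> k)) *\<^sub>R G, (1 / (\<mu> + \<theta> k)) *\<^sub>R (\<theta> k *\<^sub>R snd (iterate ss k) + \<mu> *\<^sub>R y - G)))"
  by (simp add: iterate_def extrapolate_def eta_def Let_def)

lemma run_fst_Suc_convex_comb: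
  "fst (run \<omega> (Suc k)) = (1 - \<alpha> k) *\<^sub>R fst (run \<omega> k) + \<alpha> k *\<^sub>R snd (run \<omega> (Suc k))"
  unfolding iterate_Suc[of _ k] Let_def extrapolate_def fst_conv snd_conv
  using step_denominators_pos[of k] by (intro ansgd_x_step_convex_comb) auto

lemma dist_fst_run_sq_integrable:
  assumes D_int: "\<And>k. integrable M (\<lambda>\<omega>. (norm (x - snd (run \<omega> k)))\<^sup>2)"
  shows "integrable M (\<lambda>\<omega>. (norm (x - fst (run \<omega> k)))\<^sup>2)"
proof (induction k)
  case 0
  interpret prob_space M by (rule M)
  show ?case by (simp add: iterate_def)
next
  case (Suc k)
  show ?case
  proof (rule Bochner_Integration.integrable_bound)
    show "integrable M (\<lambda>\<omega>. (1 - \<alpha> k) * (norm (x - fst (run \<omega> k)))\<^sup>2 + \<alpha> k * (norm (x - snd (run \<omega> (Suc k))))\<^sup>2)"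
      using Suc D_int by simp
    show "(\<lambda>\<omega>. (norm (x - fst (run \<omega> (Suc k))))\<^sup>2) \<in> borel_measurable M" by measurable
    show "AE \<omega> in M. norm ((norm (x - fst (run \<omega> (Suc k))))\<^sup>2)
            \<le> norm ((1 - \<alpha> k) * (norm (x - fst (run \<omega> k)))\<^sup>2 + \<alpha> k * (norm (x - snd (run \<omega> (Suc k))))\<^sup>2)"
    proof (rule AE_I2)
      fix \<omega>
      have "x - fst (run \<omega> (Suc k)) = (1 - \<alpha> k) *\<^sub>R (x - fst (run \<omega> k)) + \<alpha> k *\<^sub>R (x - snd (run \<omega> (Suc k)))"
        unfolding run_fst_Suc_convex_comb by (simp add: algebra_simps)
      then have "(norm (x - fst (run \<omega> (Suc k))))\<^sup>2
          \<le> (1 - \<alpha> k) * (norm (x - fst (run \<omega> k)))\<^sup>2 + \<alpha> k * (norm (x - snd (run \<omega> (Suc k))))\<^sup>2"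
        using norm_convex_comb_sq_le[of "\<alpha> k" "x - fst (run \<omega> k)" "x - snd (run \<omega> (Suc k))"] alpha_range[of k]
        by simp
      then show "norm ((norm (x - fst (run \<omega> (Suc k))))\<^sup>2)
            \<le> norm ((1 - \<alpha> k) * (norm (x - fst (run \<omega> k)))\<^sup>2 + \<alpha> k * (norm (x - snd (run \<omega> (Suc k))))\<^sup>2)"
        by simp
    qed
  qed
qed

lemma pointwise_descent:
  "F (\<gamma> (Suc t)) (fst (run \<omega> (Suc t)))
     \<le> (1 - \<alpha> t) * F (\<gamma> (Suc t)) (fst (run \<omega> t)) + \<alpha> t * F (\<gamma> (Suc t)) x
       + \<alpha> t * \<theta> t / 2 * (norm (x - snd (run \<omega> t)))\<^sup>2
       - \<alpha> t * (\<mu> + \<theta> t) / 2 * (norm (x - snd (run \<omega> (Suc t))))\<^sup>2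
       + \<alpha> t / (2 * (\<mu> + \<theta> t - \<alpha> t * smoothness (\<gamma> (Suc t)))) * (norm (noise \<omega> t))\<^sup>2
       + noise_inner x t (run \<omega> t) (\<xi> (Suc t) \<omega>)"
proof -
  let ?c = "\<gamma> (Suc t)"
  have bound: "F ?c (y - (\<alpha> t / (\<mu> + \<theta> t)) *\<^sub>R G)
     \<le> (1 - \<alpha> t) * F ?c xt + \<alpha> t * F ?c x + \<alpha> t * \<theta> t / 2 * (norm (x - vt))\<^sup>2
       - \<alpha> t * (\<mu> + \<theta> t) / 2 * (norm (x - (1 / (\<mu> + \<theta> t)) *\<^sub>R (\<theta> t *\<^sub>R vt + \<mu> *\<^sub>R y - G)))\<^sup>2
       + \<alpha> t / (2 * (\<mu> + \<theta> t - \<alpha> t * smoothness ?c)) * (norm (G - grad (F ?c) y))\<^sup>2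
       + inner (G - grad (F ?c) y) ((1 - \<alpha> t) *\<^sub>R xt + \<alpha> t *\<^sub>R x - y)"
    if "y = ansgd_y \<mu> (\<alpha> t) (\<theta> t) xt vt" for xt vt y G
    unfolding that using alpha_range[of t]
    by (intro ansgd_step_bound F_smooth F_strongly_convex gamma_pos mu_nonneg theta_nonneg
        step_cond mu_le_smoothness) auto
  show ?thesis
    using bound[OF refl, of "fst (run \<omega> t)" "snd (run \<omega> t)" "stoch_grad t (extrapolate t (run \<omega> t)) (\<xi> (Suc t) \<omega>)"]
    unfolding iterate_Suc[of _ t] noise_def noise_inner_def Let_def extrapolate_def by simp
qed

lemma noise_inner_run_integrable:
  assumes D_int: "\<And>k. integrable M (\<lambda>\<omega>. (norm (x - snd (run \<omega> k)))\<^sup>2)"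
    and N_int: "integrable M (\<lambda>\<omega>. (norm (noise \<omega> t))\<^sup>2)"
  shows "integrable M (\<lambda>\<omega>. noise_inner x t (run \<omega> t) (\<xi> (Suc t) \<omega>))"
proof -
  define w where "w \<omega> = (1 - \<alpha> t) *\<^sub>R fst (run \<omega> t) + \<alpha> t *\<^sub>R x - extrapolate t (run \<omega> t)" for \<omega>
  have eq: "noise_inner x t (run \<omega> t) (\<xi> (Suc t) \<omega>) = inner (noise \<omega> t) (w \<omega>)" for \<omega>
    by (simp add: noise_inner_def noise_def w_def)
  obtain C where C: "(norm (w \<omega>))\<^sup>2 \<le> C * ((norm (x - fst (run \<omega> t)))\<^sup>2 + (norm (x - snd (run \<omega> t)))\<^sup>2)" for \<omega>
    using ansgd_gap_norm_sq_le[OF step_denominators_pos(2)[THEN less_imp_neq, symmetric]]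
    unfolding w_def extrapolate_def by metis
  have [measurable]: "w \<in> borel_measurable M"
    using measurable_compose[OF run_measurable extrapolate_measurable] unfolding w_def[abs_def] by measurable
  let ?bound = "\<lambda>\<omega>. (norm (noise \<omega> t))\<^sup>2 / 2
                    + C * ((norm (x - fst (run \<omega> t)))\<^sup>2 + (norm (x - snd (run \<omega> t)))\<^sup>2) / 2"
  show ?thesis unfolding eq
  proof (rule Bochner_Integration.integrable_bound)
    show "integrable M ?bound" using N_int dist_fst_run_sq_integrable[OF D_int, of t] D_int[of t] by simp
    show "(\<lambda>\<omega>. inner (noise \<omega> t) (w \<omega>)) \<in> borel_measurable M" by measurable
    show "AE \<omega> in M. norm (inner (noise \<omega> t) (w \<omega>)) \<le> norm (?bound \<omega>)"
    proof (rule AE_I2)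
      fix \<omega>
      have "\<bar>inner (noise \<omega> t) (w \<omega>)\<bar> \<le> ?bound \<omega>"
        using abs_inner_le_half_sq[of "noise \<omega> t" "w \<omega>"] C[of \<omega>] by linarith
      then show "norm (inner (noise \<omega> t) (w \<omega>)) \<le> norm (?bound \<omega>)" by simp
    qed
  qed
qed

lemma F_run_integrable_shift:
  assumes Delta_int: "integrable M (\<lambda>\<omega>. F (\<gamma> t) (fst (run \<omega> t)))"
  shows "integrable M (\<lambda>\<omega>. F (\<gamma> (Suc t)) (fst (run \<omega> t)))"
proof (rule Bochner_Integration.integrable_bound)
  interpret prob_space M by (rule M)
  show "integrable M (\<lambda>\<omega>. \<bar>F (\<gamma> t) (fst (run \<omega> t))\<bar> + \<bar>(\<gamma> t - \<gamma> (Suc t)) * DU\<bar>)"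
    using Delta_int by simp
  show "(\<lambda>\<omega>. F (\<gamma> (Suc t)) (fst (run \<omega> t))) \<in> borel_measurable M"
    using measurable_compose[OF run_fst_measurable F_measurable[OF gamma_pos]] by simp
  show "AE \<omega> in M. norm (F (\<gamma> (Suc t)) (fst (run \<omega> t)))
          \<le> norm (\<bar>F (\<gamma> t) (fst (run \<omega> t))\<bar> + \<bar>(\<gamma> t - \<gamma> (Suc t)) * DU\<bar>)"
    using F_smoothing_shift[OF gamma_pos gamma_mono, of _ t] by (intro AE_I2) (smt (verit) real_norm_def)
qed

lemma expected_descent:
  assumes Delta_int: "\<And>k. integrable M (\<lambda>\<omega>. F (\<gamma> k) (fst (run \<omega> k)))"
    and D_int: "\<And>k. integrable M (\<lambda>\<omega>. (norm (x - snd (run \<omega> k)))\<^sup>2)"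
    and N_int: "integrable M (\<lambda>\<omega>. (norm (noise \<omega> t))\<^sup>2)"
  shows "(\<integral>\<omega>. F (\<gamma> (Suc t)) (fst (run \<omega> (Suc t))) \<partial>M) - F (\<gamma> (Suc t)) x
     \<le> (1 - \<alpha> t) * ((\<integral>\<omega>. F (\<gamma> t) (fst (run \<omega> t)) \<partial>M) - F (\<gamma> t) x)
       + \<alpha> t * \<theta> t * (1 / 2 * (\<integral>\<omega>. (norm (x - snd (run \<omega> t)))\<^sup>2 \<partial>M))
       - \<alpha> t * (\<mu> + \<theta> t) * (1 / 2 * (\<integral>\<omega>. (norm (x - snd (run \<omega> (Suc t))))\<^sup>2 \<partial>M))
       + \<alpha> t / (2 * (\<mu> + \<theta> t - \<alpha> t * smoothness (\<gamma> (Suc t)))) * (\<integral>\<omega>. (norm (noise \<omega> t))\<^sup>2 \<partial>M)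
       + (1 - \<alpha> t) * (\<gamma> t - \<gamma> (Suc t)) * DU"
proof -
  interpret prob_space M by (rule M)
  let ?c = "\<gamma> (Suc t)" and ?a = "\<alpha> t"
  define coef where "coef = ?a / (2 * (\<mu> + \<theta> t - ?a * smoothness ?c))"
  define H where "H \<omega> = noise_inner x t (run \<omega> t) (\<xi> (Suc t) \<omega>)" for \<omega>
  have H_int: "integrable M H" unfolding H_def by (rule noise_inner_run_integrable[OF D_int N_int])
  have H_zero: "(\<integral>\<omega>. H \<omega> \<partial>M) = 0" unfolding H_def by (rule noise_inner_expectation_zero[OF H_int[unfolded H_def]])
  have shift: "F (\<gamma> t) z \<le> F ?c z" "F ?c z \<le> F (\<gamma> t) z + (\<gamma> t - ?c) * DU" for z
    using F_smoothing_shift[OF gamma_pos gamma_mono] by auto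
  have Fc_int: "integrable M (\<lambda>\<omega>. F ?c (fst (run \<omega> t)))" by (rule F_run_integrable_shift[OF Delta_int])
  define RHS where "RHS \<omega> = (1 - ?a) * F ?c (fst (run \<omega> t)) + ?a * F ?c x
      + ?a * \<theta> t / 2 * (norm (x - snd (run \<omega> t)))\<^sup>2
      - ?a * (\<mu> + \<theta> t) / 2 * (norm (x - snd (run \<omega> (Suc t))))\<^sup>2 + coef * (norm (noise \<omega> t))\<^sup>2 + H \<omega>" for \<omega>
  have RHS_int: "integrable M RHS" unfolding RHS_def using Fc_int D_int N_int H_int by simp
  have "(\<integral>\<omega>. F ?c (fst (run \<omega> (Suc t))) \<partial>M) \<le> (\<integral>\<omega>. RHS \<omega> \<partial>M)"
    by (rule integral_mono[OF Delta_int RHS_int])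
      (use pointwise_descent[where t = t and x = x] in \<open>simp add: RHS_def coef_def H_def\<close>)
  also have "\<dots> = (1 - ?a) * (\<integral>\<omega>. F ?c (fst (run \<omega> t)) \<partial>M) + ?a * F ?c x
      + ?a * \<theta> t * (1 / 2 * (\<integral>\<omega>. (norm (x - snd (run \<omega> t)))\<^sup>2 \<partial>M))
      - ?a * (\<mu> + \<theta> t) * (1 / 2 * (\<integral>\<omega>. (norm (x - snd (run \<omega> (Suc t))))\<^sup>2 \<partial>M))
      + coef * (\<integral>\<omega>. (norm (noise \<omega> t))\<^sup>2 \<partial>M)"
    unfolding RHS_def using Fc_int D_int N_int H_int H_zero by (simp add: prob_space)
  also have "(1 - ?a) * (\<integral>\<omega>. F ?c (fst (run \<omega> t)) \<partial>M)
      \<le> (1 - ?a) * ((\<integral>\<omega>. F (\<gamma> t) (fst (run \<omega> t)) \<partial>M) + (\<gamma> t - ?c) * DU)"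
  proof -
    have "(\<integral>\<omega>. F ?c (fst (run \<omega> t)) \<partial>M) \<le> (\<integral>\<omega>. F (\<gamma> t) (fst (run \<omega> t)) + (\<gamma> t - ?c) * DU \<partial>M)"
      using shift(2) Fc_int Delta_int[of t] by (intro integral_mono) auto
    then show ?thesis using Delta_int[of t] alpha_range[of t] by (intro mult_left_mono) (auto simp: prob_space)
  qed
  finally show ?thesis
    using mult_left_mono[OF shift(1)[of x], of "1 - ?a"] alpha_range[of t]
    unfolding coef_def by (simp add: algebra_simps)
qed

lemma expected_descent_sup:
  assumes Delta_int: "\<And>k. integrable M (\<lambda>\<omega>. F (\<gamma> k) (fst (run \<omega> k)))"
    and D_int: "\<And>k. integrable M (\<lambda>\<omega>. (norm (x - snd (run \<omega> k)))\<^sup>2)"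
    and N_bdd: "\<And>\<omega>. bdd_above (range (\<lambda>k. (norm (noise \<omega> k))\<^sup>2))"
    and N_int: "integrable M (\<lambda>\<omega>. SUP k. (norm (noise \<omega> k))\<^sup>2)"
  shows "(\<integral>\<omega>. F (\<gamma> (Suc t)) (fst (run \<omega> (Suc t))) \<partial>M) - F (\<gamma> (Suc t)) x
     \<le> (1 - \<alpha> t) * ((\<integral>\<omega>. F (\<gamma> t) (fst (run \<omega> t)) \<partial>M) - F (\<gamma> t) x)
       + \<alpha> t * \<theta> t * (1 / 2 * (\<integral>\<omega>. (norm (x - snd (run \<omega> t)))\<^sup>2 \<partial>M))
       - \<alpha> t * (\<mu> + \<theta> t) * (1 / 2 * (\<integral>\<omega>. (norm (x - snd (run \<omega> (Suc t))))\<^sup>2 \<partial>M))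
       + \<alpha> t / (2 * (\<mu> + \<theta> t - \<alpha> t * smoothness (\<gamma> (Suc t)))) * (\<integral>\<omega>. (SUP k. (norm (noise \<omega> k))\<^sup>2) \<partial>M)
       + (1 - \<alpha> t) * (\<gamma> t - \<gamma> (Suc t)) * DU"
proof -
  have le_sup: "(norm (noise \<omega> t))\<^sup>2 \<le> (SUP k. (norm (noise \<omega> k))\<^sup>2)" for \<omega>
    using N_bdd[of \<omega>] by (intro cSUP_upper) auto
  have Nt_int: "integrable M (\<lambda>\<omega>. (norm (noise \<omega> t))\<^sup>2)"
    by (rule Bochner_Integration.integrable_bound[OF N_int]) (use le_sup in \<open>auto intro!: AE_I2 order_trans[OF _ abs_ge_self]\<close>)
  have "0 \<le> \<alpha> t / (2 * (\<mu> + \<theta> t - \<alpha> t * smoothness (\<gamma> (Suc t))))"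
    using alpha_range[of t] step_cond[of t] by simp
  then have "\<alpha> t / (2 * (\<mu> + \<theta> t - \<alpha> t * smoothness (\<gamma> (Suc t)))) * (\<integral>\<omega>. (norm (noise \<omega> t))\<^sup>2 \<partial>M)
      \<le> \<alpha> t / (2 * (\<mu> + \<theta> t - \<alpha> t * smoothness (\<gamma> (Suc t)))) * (\<integral>\<omega>. (SUP k. (norm (noise \<omega> k))\<^sup>2) \<partial>M)"
    using le_sup by (intro mult_left_mono integral_mono[OF Nt_int N_int]) auto
  then show ?thesis using expected_descent[OF Delta_int D_int Nt_int] by linarith
qed

end

theorem lemma5:
  fixes M :: "'w measure" and P :: "'b measure" and \<xi> :: "nat \<Rightarrow> 'w \<Rightarrow> 'b"
    and A :: "'b \<Rightarrow> 'd::euclidean_space \<Rightarrow> 'm::euclidean_space"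
    and U :: "'m set" and Q :: "'m \<Rightarrow> real" and om :: "'m \<Rightarrow> real"
    and \<zeta> DU :: real
    and g :: "'d \<Rightarrow> 'b \<Rightarrow> real" and Lg \<mu> :: real
    and \<gamma> \<eta> \<theta> \<alpha> :: "nat \<Rightarrow> real"
    and x0 v0 x :: 'd and t :: nat
  defines "gbar \<equiv> \<lambda>z. \<integral>s. g z s \<partial>P"
    and "X \<equiv> \<lambda>\<omega> k. fst (ansgd \<mu> \<alpha> \<theta> \<eta> (sgrad A U Q om g \<gamma> \<xi> \<omega>) x0 v0 k)"
    and "V \<equiv> \<lambda>\<omega> k. snd (ansgd \<mu> \<alpha> \<theta> \<eta> (sgrad A U Q om g \<gamma> \<xi> \<omega>) x0 v0 k)"
    and "EL \<equiv> \<lambda>k. Lg + (\<integral>\<omega>. (opnorm (A (\<xi> k \<omega>)))\<^sup>2 / (\<gamma> k * \<zeta>) \<partial>M)"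
    and "sig \<equiv> \<lambda>\<omega> k.
           (let y = ansgd_y \<mu> (\<alpha> k) (\<theta> k) (fst (ansgd \<mu> \<alpha> \<theta> \<eta> (sgrad A U Q om g \<gamma> \<xi> \<omega>) x0 v0 k))
                                         (snd (ansgd \<mu> \<alpha> \<theta> \<eta> (sgrad A U Q om g \<gamma> \<xi> \<omega>) x0 v0 k))
            in sgrad A U Q om g \<gamma> \<xi> \<omega> k y - grad (\<lambda>z. Fobj P A U Q om g z (\<gamma> (Suc k))) y)"
    and "EDelta \<equiv> \<lambda>k. (\<integral>\<omega>. Fobj P A U Q om g (fst (ansgd \<mu> \<alpha> \<theta> \<eta> (sgrad A U Q om g \<gamma> \<xi> \<omega>) x0 v0 k)) (\<gamma> k) \<partial>M)
                      - Fobj P A U Q om g x (\<gamma> k)"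
    and "Dsq \<equiv> \<lambda>k. 1 / 2 * (\<integral>\<omega>. (norm (x - snd (ansgd \<mu> \<alpha> \<theta> \<eta> (sgrad A U Q om g \<gamma> \<xi> \<omega>) x0 v0 k)))\<^sup>2 \<partial>M)"
  assumes M: "prob_space M" and P: "prob_space P"
    and xi_meas: "\<And>i. i \<ge> 1 \<Longrightarrow> \<xi> i \<in> M \<rightarrow>\<^sub>M P"
    and xi_distr: "\<And>i. i \<ge> 1 \<Longrightarrow> distr M P (\<xi> i) = P"
    and xi_indep: "prob_space.indep_vars M (\<lambda>_. P) \<xi> {1..}"
    and U_convex: "convex U" and U_ne: "U \<noteq> {}"
    and Q_cont: "continuous_on U Q" and Q_convex: "convex_on U Q"
    and om_nonneg: "\<And>u. u \<in> U \<Longrightarrow> 0 \<le> om u"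
    and zeta_pos: "\<zeta> > 0" and om_sc: "strongly_convex_on U om \<zeta>"
    and om_bdd: "bdd_above (om ` U)" and DU_def: "DU = Sup (om ` U)"
    and A_lin: "\<And>s. linear (A s)"
    and A_sq_int: "integrable P (\<lambda>s. (opnorm (A s))\<^sup>2)"
    and g_diff: "\<And>z s. (\<lambda>z. g z s) differentiable (at z)"
    and g_int: "\<And>z. integrable P (g z)"
    and g_meas: "(\<lambda>p. g (fst p) (snd p)) \<in> borel_measurable (borel \<Otimes>\<^sub>M P)"
    and g_grad_meas: "(\<lambda>p. grad (\<lambda>z. g z (snd p)) (fst p)) \<in> borel_measurable (borel \<Otimes>\<^sub>M P)"
    and g_grad_unbiased: "\<And>z. integrable P (\<lambda>s. grad (\<lambda>z. g z s) z)
                               \<and> (\<integral>s. grad (\<lambda>z. g z s) z \<partial>P) = grad gbar z"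
    and gbar_diff: "\<And>z. gbar differentiable (at z)"
    and gbar_convex: "convex_on UNIV gbar"
    and gbar_smooth: "\<And>x y. gbar x \<le> gbar y + inner (grad gbar y) (x - y) + Lg / 2 * (norm (x - y))\<^sup>2"
    and mu_nonneg: "\<mu> \<ge> 0"
    and gbar_sc: "\<And>x y. gbar x \<ge> gbar y + inner (grad gbar y) (x - y) + \<mu> / 2 * (norm (x - y))\<^sup>2"
    and fhat_int: "\<And>z c. c > 0 \<Longrightarrow> integrable P (fhat A U Q om c z)"
    and fhat_meas: "\<And>c. c > 0 \<Longrightarrow>
          (\<lambda>p. fhat A U Q om c (fst p) (snd p)) \<in> borel_measurable (borel \<Otimes>\<^sub>M P)"
    and fhat_grad_meas: "\<And>c. c > 0 \<Longrightarrow>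
          (\<lambda>p. grad (\<lambda>z. fhat A U Q om c z (snd p)) (fst p)) \<in> borel_measurable (borel \<Otimes>\<^sub>M P)"
    and Delta_int: "\<And>k. integrable M (\<lambda>\<omega>. Fobj P A U Q om g (X \<omega> k) (\<gamma> k))"
    and D_int: "\<And>k. integrable M (\<lambda>\<omega>. (norm (x - V \<omega> k))\<^sup>2)"
    and sig_bdd: "\<And>\<omega>. bdd_above (range (\<lambda>k. (norm (sig \<omega> k))\<^sup>2))"
    and sig_int: "integrable M (\<lambda>\<omega>. SUP k. (norm (sig \<omega> k))\<^sup>2)"
    and gamma_pos: "\<And>k. \<gamma> k > 0"
    and gamma_mono: "\<And>k. \<gamma> (Suc k) \<le> \<gamma> k"
    and theta_nonneg: "\<And>k. \<theta> k \<ge> 0"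
    and alpha_range: "\<And>k. 0 \<le> \<alpha> k \<and> \<alpha> k \<le> 1"
    and eta_def: "\<And>k. \<eta> k = \<alpha> k / (\<mu> + \<theta> k)"
    and step_cond: "\<And>k. \<mu> + \<theta> k - \<alpha> k * EL (Suc k) > 0"
  shows "EDelta (Suc t) \<le> (1 - \<alpha> t) * EDelta t + \<alpha> t * \<theta> t * Dsq t
           - \<alpha> t * (\<mu> + \<theta> t) * Dsq (Suc t)
           + \<alpha> t / (2 * (\<mu> + \<theta> t - \<alpha> t * EL (Suc t))) * (\<integral>\<omega>. (SUP k. (norm (sig \<omega> k))\<^sup>2) \<partial>M)
           + (1 - \<alpha> t) * (\<gamma> t - \<gamma> (Suc t)) * DU"
proof -
  have "bounded U"
    using U_convex om_nonneg zeta_pos om_sc om_bdd by (rule strongly_convex_on_bdd_above_imp_bounded)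
  then obtain R where R: "\<forall>u\<in>U. norm u \<le> R" by (auto simp: bounded_iff)
  obtain B where B: "\<forall>u\<in>U. B \<le> Q u"
    using convex_on_continuous_on_bdd_below[OF U_convex \<open>bounded U\<close> Q_cont Q_convex]
    by (auto simp: bdd_below_def)
  interpret smoothed_loss P A U Q om \<zeta> R B DU g Lg \<mu>
    by (rule smoothed_loss.intro[OF P U_convex U_ne Q_convex om_nonneg zeta_pos om_sc om_bdd DU_def A_lin
          A_sq_int R B g_int g_grad_meas g_grad_unbiased[unfolded gbar_def] gbar_diff[unfolded gbar_def]
          gbar_smooth[unfolded gbar_def] gbar_sc[unfolded gbar_def] fhat_int fhat_grad_meas])
  have EL: "EL (Suc k) = smoothness (\<gamma> (Suc k))" for k
    unfolding EL_def using smoothness_expectation[OF xi_meas xi_distr] by simp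
  interpret ansgd_process P A U Q om \<zeta> R B DU g Lg \<mu> M \<xi> \<gamma> \<theta> \<alpha> \<eta> x0 v0
    by (intro ansgd_process.intro smoothed_loss_axioms ansgd_process_axioms.intro)
      (fact M xi_meas xi_distr xi_indep gamma_pos gamma_mono mu_nonneg theta_nonneg alpha_range eta_def
        step_cond[unfolded EL])+
  have X: "X = (\<lambda>\<omega> k. fst (run \<omega> k))" and V: "V = (\<lambda>\<omega> k. snd (run \<omega> k))"
    unfolding X_def V_def ansgd_sgrad_eq_run by simp_all
  have sig: "sig = noise" unfolding sig_def ansgd_sgrad_eq_run noise_eq_sgrad ..
  show ?thesis
    using expected_descent_sup[OF Delta_int[unfolded X] D_int[unfolded V] sig_bdd[unfolded sig]
        sig_int[unfolded sig]]
    unfolding EDelta_def Dsq_def EL ansgd_sgrad_eq_run sig by (simp add: algebra_simps)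
qed

end
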